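(* Let $M$ be a complex manifold of dimension $n$ and $\varphi\colon\mathbb{C}^*\times M\to M$ a holomorphic action of $\mathbb{C}^*$ with an isolated fixed point at $p\in M$, and suppose $p$ is of the dicritical type. Let $\psi\colon\mathbb{C}^*\times\mathbb{C}^n\to\mathbb{C}^n$ be the action by linear transformations defined by the derivative of $\varphi$ at $p$. Then there are a $\varphi$-invariant open set $A\ni p$ in $M$, a $\psi$-invariant open set $B\ni 0$ in $\mathbb{C}^n$ and a biholomorphism $T\colon A\to B$ such that $$\psi^z\circ T\equiv T\circ\varphi^z\quad\text{for each } z\in\mathbb{C}^*.$$
   Context: A holomorphic action of $\mathbb{C}^*$ on $M$ is a holomorphic map $\varphi\colon\mathbb{C}^*\times M\to M$ with $\varphi(1,x)=x$, $\varphi(zw,x)=\varphi(z,\varphi(w,x))$; write $\varphi^z=\varphi(z,\cdot)$. If $p$ is a fixed point and $\xi\colon W\ni p\to\mathbb{C}^n$ is a local chart, the action by linear transformations defined by the derivative of $\varphi$ at $p$ is $\psi(z,x)=\big[D\xi(p)\cdot D\varphi^z(p)\cdot (D\xi(p))^{-1}\big]\cdot x$ (any other chart gives a linearly conjugate action). This linear holomorphic $\mathbb{C}^*$-action is linearly conjugate to one of the form $\psi^{z}(x)=(z^{\lambda_1}x_1,\dots,z^{\lambda_n}x_n)$ with $\lambda_1,\dots,\lambda_n\in\mathbb{Z}$ (equivalently, writing $z=\exp(2\pi\sqrt{-1}t)$, the flow $(\exp(2\pi\sqrt{-1}\lambda_1 t)x_1,\dots,\exp(2\pi\sqrt{-1}\lambda_n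 t)x_n)$). The fixed point $p$ is said to be of the dicritical type if all $\lambda_j$ are nonzero and have the same sign. *)

theory Defs
  imports "HOL-Analysis.Analysis"
begin

text \<open>Complex n-space is modelled as complex ^ 'n, with n = CARD('n).
A map between open subsets is holomorphic if it is Frechet differentiable at every
point with a complex-linear derivative.\<close>

definition complex_linear :: "(complex^'a \<Rightarrow> complex^'b) \<Rightarrow> bool" where
  "complex_linear L \<longleftrightarrow> linear L \<and> (\<forall>c v. L (c *s v) = c *s L v)"

definition holo :: "(complex^'a) set \<Rightarrow> (complex^'a \<Rightarrow> complex^'b) \<Rightarrow> bool" where
  "holo S f \<longleftrightarrow> open S \<and>
     (\<forall>x\<in>S. \<exists>L. (f has_derivative L) (at x) \<and> (\<forall>c v. L (c *s v) = c *s L v))"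

definition holo2 :: "(complex \<times> (complex^'a)) set \<Rightarrow> (complex \<times> (complex^'a) \<Rightarrow> complex^'b) \<Rightarrow> bool" where
  "holo2 S g \<longleftrightarrow> open S \<and>
     (\<forall>q\<in>S. \<exists>L. (g has_derivative L) (at q) \<and>
        (\<forall>c w v. L (c * w, c *s v) = c *s L (w, v)))"

definition complex_atlas :: "('m::t2_space set \<times> ('m \<Rightarrow> complex^'n)) set \<Rightarrow> bool" where
  "complex_atlas atlas \<longleftrightarrow>
     (\<Union>(fst ` atlas) = UNIV) \<and>
     (\<forall>(U,\<xi>)\<in>atlas. open U \<and> open (\<xi> ` U) \<and> homeomorphism U (\<xi> ` U) \<xi> (inv_into U \<xi>)) \<and>
     (\<forall>(U,\<xi>)\<in>atlas. \<forall>(V,\<eta>)\<in>atlas. holo (\<xi> ` (U \<inter> V)) (\<eta> \<circ> inv_into U \<xi>))"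

definition holomorphic_Cstar_action ::
  "('m::t2_space set \<times> ('m \<Rightarrow> complex^'n)) set \<Rightarrow> (complex \<Rightarrow> 'm \<Rightarrow> 'm) \<Rightarrow> bool" where
  "holomorphic_Cstar_action atlas \<phi> \<longleftrightarrow>
     (\<forall>x. \<phi> 1 x = x) \<and>
     (\<forall>z w x. z \<noteq> 0 \<longrightarrow> w \<noteq> 0 \<longrightarrow> \<phi> (z * w) x = \<phi> z (\<phi> w x)) \<and>
     continuous_on ((-{0}) \<times> (UNIV::'m set)) (\<lambda>(z,x). \<phi> z x) \<and>
     (\<forall>(U,\<xi>)\<in>atlas. \<forall>(V,\<eta>)\<in>atlas.
        holo2 {(z,y). z \<noteq> 0 \<and> y \<in> \<xi> ` U \<and> \<phi> z (inv_into U \<xi> y) \<in> V}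
              (\<lambda>(z,y). \<eta> (\<phi> z (inv_into U \<xi> y))))"

definition holo_from_mfd ::
  "('m::t2_space set \<times> ('m \<Rightarrow> complex^'n)) set \<Rightarrow> 'm set \<Rightarrow> ('m \<Rightarrow> complex^'k) \<Rightarrow> bool" where
  "holo_from_mfd atlas A T \<longleftrightarrow> open A \<and>
     (\<forall>(U,\<xi>)\<in>atlas. holo (\<xi> ` (U \<inter> A)) (T \<circ> inv_into U \<xi>))"

definition holo_to_mfd ::
  "('m::t2_space set \<times> ('m \<Rightarrow> complex^'n)) set \<Rightarrow> (complex^'k) set \<Rightarrow> (complex^'k \<Rightarrow> 'm) \<Rightarrow> bool" where
  "holo_to_mfd atlas B S \<longleftrightarrow> open B \<and> continuous_on B S \<and>
     (\<forall>(U,\<xi>)\<in>atlas. holo (B \<inter> S -` U) (\<xi> \<circ> S))"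

definition biholomorphism ::
  "('m::t2_space set \<times> ('m \<Rightarrow> complex^'n)) set \<Rightarrow> 'm set \<Rightarrow> (complex^'n) set \<Rightarrow> ('m \<Rightarrow> complex^'n) \<Rightarrow> bool" where
  "biholomorphism atlas A B T \<longleftrightarrow>
     bij_betw T A B \<and> holo_from_mfd atlas A T \<and> holo_to_mfd atlas B (inv_into A T)"

text \<open>Linear action by the derivative of phi at the fixed point p, computed in the chart (U, xi):
psi z = D(xi o phi z o xi^-1)(xi p) = D xi(p) . D phi^z(p) . (D xi(p))^-1.\<close>
definition derivative_action ::
  "('m \<Rightarrow> complex^'n) \<Rightarrow> 'm set \<Rightarrow> (complex \<Rightarrow> 'm \<Rightarrow> 'm) \<Rightarrow> 'm \<Rightarrow> complex \<Rightarrow> complex^'n \<Rightarrow> complex^'n" where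
  "derivative_action \<xi> U \<phi> p z =
     frechet_derivative (\<xi> \<circ> \<phi> z \<circ> inv_into U \<xi>) (at (\<xi> p))"

definition dicritical :: "(complex \<Rightarrow> complex^'n \<Rightarrow> complex^'n) \<Rightarrow> bool" where
  "dicritical \<psi> \<longleftrightarrow>
     (\<exists>P (lam::'n \<Rightarrow> int). complex_linear P \<and> bij P \<and>
        ((\<forall>j. lam j > 0) \<or> (\<forall>j. lam j < 0)) \<and>
        (\<forall>z v. z \<noteq> 0 \<longrightarrow> \<psi> z (P v) = P (\<chi> j. z powi (lam j) * v $ j)))"

end

(*
  Bochner linearization. In the chart \<xi> at p, average the action over the circle subgroup:
    avg y = \<integral>\<^sub>0\<^sup>1 \<psi> (e2pi (-t)) (\<xi> (\<phi> (e2pi t) (\<xi>\<^sup>-\<^sup>1 y)) - \<xi> p) dt,   e2pi t = exp (2\<pi>it).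
  Its derivative at \<xi> p is the identity, so it is a local biholomorphism, and it intertwines
  the circle action with \<psi>. Both sides of avg (\<xi> (\<phi> w x)) = \<psi> w (avg (\<xi> x)) are holomorphic
  in w, so the identity extends to w near 1, and by taking powers to the whole contracting half
  K of \<complex>\<^sup>* (|w| \<le> 1 or |w| \<ge> 1, according to the sign of the weights), on a K-invariant
  neighbourhood W of p that avg \<circ> \<xi> maps onto a polydisc in eigen-coordinates. Since all weights
  have the same sign, every \<psi>-orbit enters this polydisc, so T x = \<psi> (1/w) (avg (\<xi> (\<phi> w x))),
  for any w with \<phi> w x \<in> W, is a well-defined equivariant biholomorphism from the saturation of
  W onto \<complex>\<^sup>n.
*)

theory Submission
  imports Defs "HOL-Complex_Analysis.Complex_Analysis"
begin

lemma bounded_linear_vector_smult_left: "bounded_linear (\<lambda>u::complex. u *s (v::complex^'n))"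
proof -
  have "linear (\<lambda>u::complex. u *s v)" by (rule linearI) (auto simp: vec_eq_iff algebra_simps)
  then show ?thesis by (simp add: linear_conv_bounded_linear)
qed

lemma bounded_linear_vector_smult_right: "bounded_linear (\<lambda>v::complex^'n. c *s v)"
proof -
  have "linear (\<lambda>v::complex^'n. c *s v)" by (rule linearI) (auto simp: vec_eq_iff algebra_simps)
  then show ?thesis by (simp add: linear_conv_bounded_linear)
qed

lemma inv_vector_smult:
  assumes "bij f" "\<And>c v. f (c *s v) = c *s f v"
  shows "inv f (c *s v) = c *s inv f v"
proof -
  have "f (c *s inv f v) = c *s v" using assms by (simp add: bij_is_surj surj_f_inv_f)
  then show ?thesis using assms(1) by (metis bij_is_inj inv_f_f)
qed

lemma complex_linear_imp_bounded_linear: "complex_linear L \<Longrightarrow> bounded_linear L"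
  by (simp add: complex_linear_def linear_conv_bounded_linear)

lemma holomorphic_on_vec_nth:
  fixes F :: "complex \<Rightarrow> complex^'n"
  assumes "\<And>w. w \<in> S \<Longrightarrow> \<exists>a. (F has_derivative (\<lambda>h. h *s a)) (at w)"
  shows "(\<lambda>w. F w $ j) holomorphic_on S"
  unfolding holomorphic_on_def
proof
  fix w assume "w \<in> S"
  then obtain a where "(F has_derivative (\<lambda>h. h *s a)) (at w)" using assms by blast
  from bounded_linear.has_derivative[OF bounded_linear_vec_nth[of j] this]
  have "((\<lambda>w. F w $ j) has_field_derivative a $ j) (at w)"
    unfolding has_field_derivative_def by (rule has_derivative_eq_rhs) (auto simp: mult.commute)
  then show "(\<lambda>w. F w $ j) field_differentiable at w within S"
    using field_differentiable_at_within field_differentiable_def by blast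
qed

lemma has_field_derivative_along_line:
  fixes F L :: "complex^'a \<Rightarrow> complex^'b"
  assumes "(F has_derivative L) (at (y + u *s v))" "\<And>c. L (c *s v) = c *s L v"
  shows "((\<lambda>u. F (y + u *s v) $ j) has_field_derivative L v $ j) (at u)"
proof -
  have "((\<lambda>u. y + u *s v) has_derivative (\<lambda>h. h *s v)) (at u)"
    by (auto intro!: derivative_eq_intros
        bounded_linear.has_derivative[OF bounded_linear_vector_smult_left])
  from bounded_linear.has_derivative[OF bounded_linear_vec_nth diff_chain_at[OF this assms(1)]]
  show ?thesis
    unfolding has_field_derivative_def o_def
    by (rule has_derivative_eq_rhs) (auto simp: assms(2) mult.commute)
qed

lemma isCont_deriv_param:
  fixes f :: "'a::metric_space \<Rightarrow> complex \<Rightarrow> complex"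
  assumes cont: "continuous_on (N \<times> cball z r) (\<lambda>(q, u). f q u)" and N: "open N" "q0 \<in> N"
    and r: "r > 0" and holo: "\<And>q. q \<in> N \<Longrightarrow> f q holomorphic_on ball z r"
  shows "isCont (\<lambda>q. deriv (f q) z) q0"
proof (cases "at q0 = bot")
  case False
  have "uniform_limit (cball z r) f (f q0) (at q0)"
  proof (rule uniform_limitI)
    fix e :: real assume e: "e > 0"
    obtain X where X: "q0 \<in> X" "open X"
      "\<forall>q\<in>X \<inter> N. \<forall>u\<in>cball z r. dist (f q u) (f q0 u) \<le> e / 2"
      using continuous_on_prod_compactE[OF cont compact_cball N(2) half_gt_zero[OF e]]
      unfolding case_prod_conv .
    have "\<forall>\<^sub>F q in at q0. q \<in> X \<inter> N"
      using X N by (intro eventually_at_in_open') auto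
    then show "\<forall>\<^sub>F q in at q0. \<forall>u\<in>cball z r. dist (f q u) (f q0 u) < e"
    proof eventually_elim
      case (elim q)
      show ?case
      proof
        fix u assume "u \<in> cball z r"
        then have "dist (f q u) (f q0 u) \<le> e / 2" using X(3) elim by auto
        then show "dist (f q u) (f q0 u) < e" using e by linarith
      qed
    qed
  qed
  then have "uniform_limit (ball z r) f (f q0) (at q0)"
    by (rule uniform_limit_on_subset) (rule ball_subset_cball)
  moreover have "\<forall>\<^sub>F q in at q0. f q holomorphic_on ball z r"
    using eventually_at_in_open'[OF N] by (rule eventually_mono) (rule holo)
  ultimately have "((\<lambda>q. deriv (f q) z) \<longlongrightarrow> deriv (f q0) z) (at q0)"
    using False r by (intro deriv_complex_uniform_limit[where A = "ball z r"]) auto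
  then show ?thesis by (simp add: isCont_def)
qed (simp add: isCont_def)

lemma compact_times_ball_subset:
  fixes W :: "('a::metric_space \<times> 'b::metric_space) set"
  assumes "compact K" "open W" "K \<times> {y} \<subseteq> W"
  obtains d where "d > 0" "K \<times> ball y d \<subseteq> W"
proof -
  let ?W = "(\<lambda>q. (snd q, fst q)) -` W"
  have "open ?W"
    by (rule continuous_open_vimage[OF assms(2)]) (intro continuous_intros)
  moreover have "{y} \<times> K \<subseteq> ?W" using assms(3) by auto
  ultimately have "\<exists>V. y \<in> V \<and> open V \<and> V \<times> K \<subseteq> ?W"
    by (rule Elementary_Topology.tube_lemma[OF assms(1)])
  then obtain V where V: "y \<in> V" "open V" "V \<times> K \<subseteq> ?W" by blast
  obtain d where d: "d > 0" "ball y d \<subseteq> V" using V open_contains_ball by blast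
  have "K \<times> ball y d \<subseteq> W"
  proof safe
    fix a b assume "a \<in> K" "b \<in> ball y d"
    then have "(b, a) \<in> V \<times> K" using d(2) by auto
    then show "(a, b) \<in> W" using V(3) by auto
  qed
  with d(1) show ?thesis by (rule that)
qed

lemma integral_blinfun_vector_smult:
  fixes F :: "real \<Rightarrow> (complex^'a) \<Rightarrow>\<^sub>L (complex^'b)"
  assumes cont: "continuous_on {0..1} F" and scale: "\<And>t. t \<in> {0..1} \<Longrightarrow> F t (c *s v) = c *s F t v"
  shows "integral {0..1} F (c *s v) = c *s integral {0..1} F v"
proof -
  have int: "F integrable_on {0..1}" by (rule integrable_continuous_interval[OF cont])
  have "integral {0..1} F (c *s v) = integral {0..1} (\<lambda>t. c *s F t v)"
    unfolding blinfun_apply_integral[OF int] by (rule integral_cong) (rule scale)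
  also have "\<dots> = c *s integral {0..1} (\<lambda>t. F t v)"
    using integral_linear[OF integrable_linear[OF int blinfun.bounded_linear_left[of v]]
        bounded_linear_vector_smult_right[of c]]
    by (simp add: o_def)
  finally show ?thesis by (simp add: blinfun_apply_integral[OF int])
qed

lemma has_derivative_integral_param:
  fixes f :: "'a::euclidean_space \<Rightarrow> real \<Rightarrow> 'b::banach"
  assumes S: "open S" "y \<in> S"
    and f': "\<And>y t. y \<in> S \<Longrightarrow> t \<in> {0..1} \<Longrightarrow> ((\<lambda>y. f y t) has_derivative blinfun_apply (f' y t)) (at y)"
    and int: "\<And>y. y \<in> S \<Longrightarrow> f y integrable_on {0..1}"
    and cont: "continuous_on (S \<times> {0..1}) (\<lambda>(y, t). f' y t)"
  shows "((\<lambda>y. integral {0..1} (f y)) has_derivative integral {0..1} (f' y)) (at y)"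
proof -
  obtain r where r: "r > 0" "ball y r \<subseteq> S" using S open_contains_ball by blast
  have "((\<lambda>y. integral (cbox 0 1) (f y)) has_derivative integral (cbox 0 1) (f' y))
      (at y within ball y r)"
  proof (rule leibniz_rule)
    show "((\<lambda>y. f y t) has_derivative blinfun_apply (f' x t)) (at x within ball y r)"
      if "x \<in> ball y r" "t \<in> cbox 0 1" for x t
    proof -
      have "x \<in> S" "t \<in> {0..1}" using that r(2) by (auto simp: cbox_interval)
      from f'[OF this] show ?thesis by (rule has_derivative_at_withinI)
    qed
    show "f x integrable_on cbox 0 1" if "x \<in> ball y r" for x
      using int[of x] that r(2) by (auto simp: cbox_interval)
    show "continuous_on (ball y r \<times> cbox 0 1) (\<lambda>(x, t). f' x t)"
      unfolding cbox_interval
      by (rule continuous_on_subset[OF cont]) (intro Sigma_mono r(2) order_refl)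
  qed (use r(1) in simp_all)
  moreover have "at y within ball y r = at y" using r(1) by (intro at_within_open) auto
  ultimately show ?thesis by (simp add: cbox_interval)
qed

lemma integral_periodic_shift:
  fixes f :: "real \<Rightarrow> 'b::euclidean_space"
  assumes cont: "continuous_on UNIV f" and per: "\<And>t. f (t + 1) = f t" and s: "0 \<le> s" "s \<le> 1"
  shows "integral {0..1} (\<lambda>t. f (t + s)) = integral {0..1} f"
proof -
  have int: "f integrable_on {a..b}" for a b
    by (rule integrable_continuous_interval) (rule continuous_on_subset[OF cont], simp)
  have "integral {0..1} (\<lambda>t. f (t + s)) = integral {s..1+s} f"
    using integral_shift_real_ivl[where f=f and a=s and b="1+s" and c=s] by simp
  also have "\<dots> = integral {s..1} f + integral {1..1+s} f"
    using Henstock_Kurzweil_Integration.integral_combine[where f=f and a=s and c=1 and b="1+s"]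
      s int
    by simp
  also have "integral {1..1+s} f = integral {0..s} f"
  proof -
    have "integral {1-1..1+s-1} (\<lambda>x. f (x + 1)) = integral {1..1+s} f"
      by (rule integral_shift_real_ivl)
    then show ?thesis using per by simp
  qed
  also have "integral {s..1} f + integral {0..s} f = integral {0..1} f"
    using Henstock_Kurzweil_Integration.integral_combine[where f=f and a=0 and c=s and b=1] s int
    by (simp add: add.commute)
  finally show ?thesis .
qed

definition e2pi :: "real \<Rightarrow> complex" where
  "e2pi t = exp (2 * of_real pi * \<i> * of_real t)"

lemma e2pi_nonzero [simp]: "e2pi t \<noteq> 0"
  by (simp add: e2pi_def)

lemma norm_e2pi [simp]: "norm (e2pi t) = 1"
  by (simp add: e2pi_def norm_exp_eq_Re)

lemma e2pi_add: "e2pi (s + t) = e2pi s * e2pi t"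
  by (simp add: e2pi_def distrib_left exp_add)

lemma e2pi_0 [simp]: "e2pi 0 = 1"
  by (simp add: e2pi_def)

lemma e2pi_minus: "e2pi (- t) = inverse (e2pi t)"
  by (simp add: e2pi_def exp_minus)

lemma e2pi_periodic [simp]: "e2pi (t + 1) = e2pi t"
proof -
  have "e2pi 1 = 1" by (simp add: e2pi_def)
  then show ?thesis by (simp add: e2pi_add)
qed

lemma continuous_on_e2pi [continuous_intros]: "continuous_on S f \<Longrightarrow> continuous_on S (\<lambda>x. e2pi (f x))"
  unfolding e2pi_def by (intro continuous_intros)

lemma e2pi_neq_1: "0 < s \<Longrightarrow> s < 1 \<Longrightarrow> e2pi s \<noteq> 1"
proof
  assume s: "0 < s" "s < 1" and "e2pi s = 1"
  then obtain n :: int where "2 * pi * s = of_int (2 * n) * pi"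
    unfolding e2pi_def exp_eq_1 by auto
  then have "s = of_int n" by simp
  with s show False by auto
qed

lemma one_islimpt_e2pi: "r > 0 \<Longrightarrow> 1 islimpt (e2pi ` {0<..<1} \<inter> ball 1 r)"
  unfolding islimpt_approachable
proof (intro allI impI)
  fix e :: real assume "r > 0" "e > 0"
  have "isCont e2pi 0" unfolding e2pi_def by (intro continuous_intros)
  then obtain d where d: "d > 0" "\<And>s. dist s 0 < d \<Longrightarrow> dist (e2pi s) (e2pi 0) < min e r"
    unfolding continuous_at_eps_delta using \<open>r > 0\<close> \<open>e > 0\<close> by (metis min_less_iff_conj)
  define s where "s = min (d / 2) (1 / 2)"
  have s: "0 < s" "s < 1" "dist s 0 < d" using d by (auto simp: s_def)
  have "dist (e2pi s) 1 < min e r" using d(2)[OF s(3)] by simp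
  then show "\<exists>x'\<in>e2pi ` {0<..<1} \<inter> ball 1 r. x' \<noteq> 1 \<and> dist x' 1 < e"
    using s e2pi_neq_1[OF s(1,2)] by (auto simp: dist_commute intro!: bexI[of _ "e2pi s"])
qed

section \<open>Holomorphic maps between open subsets of \<open>\<complex>\<^sup>n\<close>\<close>

lemma holoD:
  assumes "holo S f" "x \<in> S"
  shows "(f has_derivative frechet_derivative f (at x)) (at x)"
    and "frechet_derivative f (at x) (c *s v) = c *s frechet_derivative f (at x) v"
proof -
  obtain L where L: "(f has_derivative L) (at x)" "\<forall>c v. L (c *s v) = c *s L v"
    using assms unfolding holo_def by blast
  moreover have "L = frechet_derivative f (at x)" by (rule frechet_derivative_at[OF L(1)])
  ultimately show "(f has_derivative frechet_derivative f (at x)) (at x)"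
    and "frechet_derivative f (at x) (c *s v) = c *s frechet_derivative f (at x) v" by auto
qed

lemma holo_continuous_on: "holo S f \<Longrightarrow> continuous_on S f"
  unfolding holo_def by (meson continuous_at_imp_continuous_on has_derivative_continuous)

lemma holo_compose:
  assumes f: "holo S f" and g: "holo T g"
  shows "holo (S \<inter> f -` T) (g \<circ> f)"
  unfolding holo_def
proof (intro conjI ballI)
  show "open (S \<inter> f -` T)"
    using f g by (intro continuous_open_preimage holo_continuous_on) (auto simp: holo_def)
  fix x assume x: "x \<in> S \<inter> f -` T"
  obtain L where L: "(f has_derivative L) (at x)" "\<forall>c v. L (c *s v) = c *s L v"
    using f x unfolding holo_def by blast
  obtain M where M: "(g has_derivative M) (at (f x))" "\<forall>c v. M (c *s v) = c *s M v"
    using g x unfolding holo_def by blast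
  show "\<exists>L. (g \<circ> f has_derivative L) (at x) \<and> (\<forall>c v. L (c *s v) = c *s L v)"
    using diff_chain_at[OF L(1) M(1)] L(2) M(2) by auto
qed

lemma holo_transform:
  assumes "holo S f" "open T" "T \<subseteq> S" "\<And>x. x \<in> T \<Longrightarrow> f x = g x"
  shows "holo T g"
  unfolding holo_def
proof (intro conjI ballI)
  fix x assume "x \<in> T"
  moreover obtain L where "(f has_derivative L) (at x)" "\<forall>c v. L (c *s v) = c *s L v"
    using assms \<open>x \<in> T\<close> unfolding holo_def by blast
  ultimately show "\<exists>L. (g has_derivative L) (at x) \<and> (\<forall>c v. L (c *s v) = c *s L v)"
    using has_derivative_transform_within_open assms(2,4) by blast
qed (fact assms)

lemma holo_locally:
  assumes "open S"
    and "\<And>x. x \<in> S \<Longrightarrow> \<exists>N g. x \<in> N \<and> holo N g \<and> (\<forall>y\<in>N. g y = f y)"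
  shows "holo S f"
  unfolding holo_def
proof (intro conjI ballI)
  fix x assume "x \<in> S"
  then obtain N g where N: "x \<in> N" "holo N g" "\<forall>y\<in>N. g y = f y" using assms(2) by blast
  have "holo N f" by (rule holo_transform[OF N(2)]) (use N(2,3) in \<open>auto simp: holo_def\<close>)
  then show "\<exists>L. (f has_derivative L) (at x) \<and> (\<forall>c v. L (c *s v) = c *s L v)"
    using N(1) unfolding holo_def by blast
qed (fact assms)

lemma holo_complex_linear:
  assumes "open S" "complex_linear L"
  shows "holo S L"
  using assms bounded_linear_imp_has_derivative[OF complex_linear_imp_bounded_linear[OF assms(2)]]
  by (auto simp: holo_def complex_linear_def)

lemma holo_compose_linear: "holo S f \<Longrightarrow> complex_linear L \<Longrightarrow> holo S (L \<circ> f)"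
  using holo_compose[OF _ holo_complex_linear[OF open_UNIV]] by fastforce

lemma holo_inverse_function:
  fixes f :: "complex^'n \<Rightarrow> complex^'n" and f' :: "complex^'n \<Rightarrow> (complex^'n) \<Rightarrow>\<^sub>L (complex^'n)"
  assumes S: "open S" and f': "\<And>y. y \<in> S \<Longrightarrow> (f has_derivative f' y) (at y)"
    and scale: "\<And>y c v. y \<in> S \<Longrightarrow> f' y (c *s v) = c *s f' y v"
    and cont: "continuous_on S f'" and x0: "x0 \<in> S" "f' x0 = id_blinfun"
  obtains S' V g where "open S'" "S' \<subseteq> S" "x0 \<in> S'" "open V" "f x0 \<in> V"
    "homeomorphism S' V f g" "holo V g"
proof -
  have "id_blinfun o\<^sub>L f' x0 = id_blinfun" using x0(2) by (auto intro: blinfun_eqI)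
  then obtain S' V g g' where S': "open S'" "S' \<subseteq> S" "x0 \<in> S'" "open V" "f x0 \<in> V"
      "homeomorphism S' V f g"
      and g': "\<And>y. y \<in> V \<Longrightarrow> (g has_derivative g' y) (at y)"
      "\<And>y. y \<in> V \<Longrightarrow> g' y = inv (blinfun_apply (f' (g y)))"
      "\<And>y. y \<in> V \<Longrightarrow> bij (blinfun_apply (f' (g y)))"
    using inverse_function_theorem[OF S f' cont x0(1)] by blast
  have "holo V g"
    unfolding holo_def
  proof (intro conjI ballI)
    fix y assume y: "y \<in> V"
    have "g y \<in> S" using S'(2,6) y by (auto simp: homeomorphism_def)
    then have "g' y (c *s v) = c *s g' y v" for c v
      unfolding g'(2)[OF y] by (intro inv_vector_smult g'(3)[OF y] scale)
    with g'(1)[OF y] show "\<exists>L. (g has_derivative L) (at y) \<and> (\<forall>c v. L (c *s v) = c *s L v)"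
      by blast
  qed (fact S')
  with S' show ?thesis by (rule that)
qed

lemma holo2_continuous: "holo2 D g \<Longrightarrow> continuous_on D g"
  unfolding holo2_def by (meson continuous_at_imp_continuous_on has_derivative_continuous)

lemma holo2_slice: "holo2 D g \<Longrightarrow> holo {y. (z, y) \<in> D} (\<lambda>y. g (z, y))"
  unfolding holo_def
proof (intro conjI ballI)
  assume "holo2 D g"
  then show "open {y. (z, y) \<in> D}"
    unfolding holo2_def
    by (auto intro!: continuous_open_vimage[of D "\<lambda>y. (z, y)", unfolded vimage_def])
  fix y assume "holo2 D g" "y \<in> {y. (z, y) \<in> D}"
  then obtain L where L: "(g has_derivative L) (at (z, y))"
    "\<forall>c w v. L (c * w, c *s v) = c *s L (w, v)"
    unfolding holo2_def by blast
  have "((\<lambda>y. (z, y)) has_derivative (\<lambda>v. (0, v))) (at y)"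
    by (auto intro!: derivative_eq_intros)
  from diff_chain_at[OF this L(1)] L(2)[rule_format, of _ 0]
  show "\<exists>L. ((\<lambda>y. g (z, y)) has_derivative L) (at y) \<and> (\<forall>c v. L (c *s v) = c *s L v)"
    by (auto simp: o_def)
qed

lemma holo2_has_derivative_fst:
  assumes "holo2 D g" "(z, y) \<in> D"
  obtains a where "((\<lambda>w. g (w, y)) has_derivative (\<lambda>h. h *s a)) (at z)"
proof -
  obtain L where L: "(g has_derivative L) (at (z, y))" "\<forall>c w v. L (c * w, c *s v) = c *s L (w, v)"
    using assms unfolding holo2_def by blast
  have "((\<lambda>w. (w, y)) has_derivative (\<lambda>h. (h, 0))) (at z)"
    by (auto intro!: derivative_eq_intros)
  from diff_chain_at[OF this L(1)] have "((\<lambda>w. g (w, y)) has_derivative (\<lambda>h. L (h, 0))) (at z)"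
    by (simp add: o_def)
  moreover have "(\<lambda>h. L (h, 0)) = (\<lambda>h. h *s L (1, 0))"
  proof
    fix h
    have "h *s (0::complex^'b) = 0" by (simp add: vec_eq_iff)
    then show "L (h, 0) = h *s L (1, 0)" using L(2)[rule_format, of h 1 0] by simp
  qed
  ultimately show ?thesis by (intro that) simp
qed

definition slice_deriv ::
  "(complex \<times> (complex^'a) \<Rightarrow> complex^'b) \<Rightarrow> complex \<Rightarrow> complex^'a \<Rightarrow> complex^'a \<Rightarrow> complex^'b" where
  "slice_deriv g z y = frechet_derivative (\<lambda>y. g (z, y)) (at y)"

lemma holo2_slice_deriv:
  assumes "holo2 D g" "(z, y) \<in> D"
  shows "((\<lambda>y. g (z, y)) has_derivative slice_deriv g z y) (at y)"
    and "slice_deriv g z y (c *s v) = c *s slice_deriv g z y v"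
  using holoD[OF holo2_slice[OF assms(1)], of y z] assms(2) by (auto simp: slice_deriv_def)

lemma line_nbhd:
  fixes D :: "(complex \<times> (complex^'a)) set"
  assumes "open D" "q0 \<in> D"
  obtains N r where "open N" "q0 \<in> N" "r > 0"
    "\<And>q u. q \<in> N \<Longrightarrow> u \<in> cball 0 r \<Longrightarrow> (fst q, snd q + u *s v) \<in> D"
proof -
  define line :: "(complex \<times> (complex^'a)) \<times> complex \<Rightarrow> complex \<times> (complex^'a)"
    where "line = (\<lambda>(q, u). (fst q, snd q + u *s v))"
  have "continuous_on UNIV line"
    unfolding line_def
    by (auto simp: split_beta intro!: continuous_intros
        bounded_linear.continuous_on[OF bounded_linear_vector_smult_left])
  then have "open (line -` D)" using assms(1) by (rule open_vimage[rotated])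
  moreover have "(q0, 0) \<in> line -` D" using assms(2) by (simp add: line_def)
  ultimately obtain N R where N: "open N" "q0 \<in> N" and R: "open R" "0 \<in> R" "N \<times> R \<subseteq> line -` D"
    by (rule open_prod_elim) auto
  obtain r where r: "r > 0" "cball 0 r \<subseteq> R" using R(1,2) open_contains_cball by blast
  have "(fst q, snd q + u *s v) \<in> D" if "q \<in> N" "u \<in> cball 0 r" for q u
  proof -
    have "(q, u) \<in> line -` D" using R(3) r(2) that by blast
    then show ?thesis by (simp add: line_def)
  qed
  with N r(1) show ?thesis by (rule that)
qed

text \<open>Restricted to a complex line, a partial derivative of a holomorphic map is the derivative
of a holomorphic function of one variable, which depends continuously on parameters by the Cauchy
integral formula.\<close>

lemma isCont_slice_deriv_nth:
  fixes g :: "complex \<times> (complex^'a) \<Rightarrow> complex^'b"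
  assumes g: "holo2 D g" and q0: "q0 \<in> D"
  shows "isCont (\<lambda>q. slice_deriv g (fst q) (snd q) v $ j) q0"
proof -
  obtain N r where N: "open N" "q0 \<in> N" and r: "r > 0"
    and inD: "\<And>q u. q \<in> N \<Longrightarrow> u \<in> cball 0 r \<Longrightarrow> (fst q, snd q + u *s v) \<in> D"
    using line_nbhd[OF _ q0] g by (metis holo2_def)
  define f where "f q u = g (fst q, snd q + u *s v) $ j" for q u
  have fder: "(f q has_field_derivative slice_deriv g (fst q) (snd q + u *s v) v $ j) (at u)"
    if "q \<in> N" "u \<in> cball 0 r" for q u
    unfolding f_def
    by (rule has_field_derivative_along_line) (use holo2_slice_deriv[OF g inD[OF that]] in auto)
  have "f q holomorphic_on ball 0 r" if "q \<in> N" for q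
  proof -
    have "f q field_differentiable at u" if "u \<in> ball 0 r" for u
      using fder[OF \<open>q \<in> N\<close>, of u] that by (auto simp: field_differentiable_def)
    then show ?thesis by (meson field_differentiable_at_within holomorphic_on_def)
  qed
  moreover have "continuous_on (N \<times> cball 0 r) (\<lambda>(q, u). f q u)"
  proof -
    have "continuous_on (N \<times> cball 0 r) (\<lambda>x. g (fst (fst x), snd (fst x) + snd x *s v))"
      by (rule continuous_on_compose2[OF holo2_continuous[OF g]])
        (auto intro!: continuous_intros inD
          bounded_linear.continuous_on[OF bounded_linear_vector_smult_left])
    then show ?thesis unfolding f_def split_beta by (intro continuous_intros)
  qed
  ultimately have "isCont (\<lambda>q. deriv (f q) 0) q0"
    using N r by (intro isCont_deriv_param[of N 0 r f])
  moreover have ev: "\<forall>\<^sub>F q in nhds q0. deriv (f q) 0 = slice_deriv g (fst q) (snd q) v $ j"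
    using fder[of _ 0] r N unfolding eventually_nhds
    by (intro exI[of _ N]) (auto intro!: DERIV_imp_deriv)
  ultimately show ?thesis using isCont_cong[OF ev] by simp
qed

lemma continuous_on_slice_deriv:
  fixes g :: "complex \<times> (complex^'a) \<Rightarrow> complex^'b"
  assumes "holo2 D g"
  shows "continuous_on D (\<lambda>q. slice_deriv g (fst q) (snd q) v)"
proof -
  have "continuous_on D (\<lambda>q. \<chi> j. slice_deriv g (fst q) (snd q) v $ j)"
    using isCont_slice_deriv_nth[OF assms]
    by (intro continuous_on_vec_lambda continuous_at_imp_continuous_on ballI)
  then show ?thesis by simp
qed

section \<open>Dicritical linear actions\<close>

text \<open>\<open>pos\<close> records whether all weights are positive or all negative; \<open>contracting\<close> is the half
of \<open>\<complex>\<^sup>*\<close> on which \<open>\<psi>\<close> is non-expanding in the eigen-coordinates.\<close>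

locale dicritical_action =
  fixes \<psi> :: "complex \<Rightarrow> complex^'n \<Rightarrow> complex^'n"
    and P :: "complex^'n \<Rightarrow> complex^'n" and lam :: "'n \<Rightarrow> int" and pos :: bool
  assumes P: "complex_linear P" "bij P"
    and lam_pos: "pos \<Longrightarrow> lam j > 0" and lam_neg: "\<not> pos \<Longrightarrow> lam j < 0"
    and psi_P: "z \<noteq> 0 \<Longrightarrow> \<psi> z (P v) = P (\<chi> j. z powi lam j * v $ j)"
begin

definition diag :: "complex \<Rightarrow> complex^'n \<Rightarrow> complex^'n" where
  "diag z v = (\<chi> j. z powi lam j * v $ j)"

lemma P_inv_P [simp]: "P (inv P u) = u" and inv_P_P [simp]: "inv P (P v) = v"
  using P(2) by (simp_all add: bij_is_surj bij_is_inj surj_f_inv_f inv_f_f)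

lemma complex_linear_inv_P: "complex_linear (inv P)"
  using P inj_linear_imp_inv_linear[of P] inv_vector_smult[of P]
  by (auto simp: complex_linear_def bij_is_inj)

lemma bounded_linear_P: "bounded_linear P" and bounded_linear_inv_P: "bounded_linear (inv P)"
  using P(1) complex_linear_inv_P by (simp_all add: complex_linear_imp_bounded_linear)


lemma psi_eq: "z \<noteq> 0 \<Longrightarrow> \<psi> z u = P (diag z (inv P u))"
  using psi_P[of z "inv P u"] by (simp add: diag_def)

lemma inv_P_psi: "z \<noteq> 0 \<Longrightarrow> inv P (\<psi> z u) = diag z (inv P u)"
  by (simp add: psi_eq)

lemma psi_mult: "z \<noteq> 0 \<Longrightarrow> w \<noteq> 0 \<Longrightarrow> \<psi> z (\<psi> w u) = \<psi> (z * w) u"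
  by (simp add: psi_eq diag_def vec_eq_iff power_int_mult_distrib mult_ac)

lemma psi_1 [simp]: "\<psi> 1 u = u"
  by (simp add: psi_eq diag_def vec_eq_iff)

lemma psi_inverse: "w \<noteq> 0 \<Longrightarrow> \<psi> (inverse w) (\<psi> w u) = u"
  and psi_inverse': "w \<noteq> 0 \<Longrightarrow> \<psi> w (\<psi> (inverse w) u) = u"
  by (simp_all add: psi_mult)

lemma complex_linear_psi: "z \<noteq> 0 \<Longrightarrow> complex_linear (\<psi> z)"
proof -
  assume z: "z \<noteq> 0"
  have "complex_linear (diag z)"
    unfolding complex_linear_def diag_def
    by (auto intro!: linearI simp: vec_eq_iff algebra_simps)
  then have "complex_linear (P \<circ> diag z \<circ> inv P)"
    using P(1) complex_linear_inv_P by (auto simp: complex_linear_def intro: linear_compose)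
  moreover have "P \<circ> diag z \<circ> inv P = \<psi> z" using z by (auto simp: psi_eq)
  ultimately show ?thesis by simp
qed

lemma bounded_linear_psi: "z \<noteq> 0 \<Longrightarrow> bounded_linear (\<psi> z)"
  by (rule complex_linear_imp_bounded_linear[OF complex_linear_psi])

lemma psi_0 [simp]: "z \<noteq> 0 \<Longrightarrow> \<psi> z 0 = 0"
  using complex_linear_psi by (simp add: complex_linear_def linear_0)

lemma psi_scale: "z \<noteq> 0 \<Longrightarrow> \<psi> z (c *s u) = c *s \<psi> z u"
  using complex_linear_psi by (simp add: complex_linear_def)

lemma continuous_on_psi: "continuous_on ((- {0}) \<times> UNIV) (\<lambda>(z, u). \<psi> z u)"
proof -
  have "continuous_on ((- {0}) \<times> UNIV) (\<lambda>(z, u). P (diag z (inv P u)))"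
    unfolding diag_def split_beta
    by (intro continuous_on_compose2[OF linear_continuous_on[OF bounded_linear_P]]
        continuous_on_vec_lambda continuous_intros
        continuous_on_compose2[OF linear_continuous_on[OF bounded_linear_inv_P]]) auto
  then show ?thesis
  proof (rule continuous_on_eq)
    fix x :: "complex \<times> (complex^'n)" assume "x \<in> (- {0}) \<times> UNIV"
    then show "(\<lambda>(z, u). P (diag z (inv P u))) x = (\<lambda>(z, u). \<psi> z u) x"
      by (cases x) (simp add: psi_eq)
  qed
qed

lemma continuous_on_psi_compose [continuous_intros]:
  assumes "continuous_on S f" "continuous_on S g" "\<And>x. x \<in> S \<Longrightarrow> f x \<noteq> 0"
  shows "continuous_on S (\<lambda>x. \<psi> (f x) (g x))"
  using continuous_on_compose2[OF continuous_on_psi, of S "\<lambda>x. (f x, g x)"] assms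
  by (auto intro!: continuous_intros)

lemma holomorphic_on_psi: "(\<lambda>w. \<psi> w u $ j) holomorphic_on - {0}"
proof -
  define v where "v = inv P u"
  have eq: "\<psi> w u $ j = (\<Sum>k\<in>UNIV. w powi lam k * (v $ k * P (axis k 1) $ j))" if "w \<in> - {0}" for w
  proof -
    have "\<psi> w u = P (\<Sum>k\<in>UNIV. diag w v $ k *s axis k 1)"
      using that by (simp add: psi_eq v_def basis_expansion)
    also have "\<dots> = (\<Sum>k\<in>UNIV. diag w v $ k *s P (axis k 1))"
      using P(1) by (simp add: complex_linear_def linear_sum)
    finally show ?thesis by (simp add: diag_def sum_component mult_ac)
  qed
  have hol: "(\<lambda>w. \<Sum>k\<in>UNIV. w powi lam k * (v $ k * P (axis k 1) $ j)) holomorphic_on - {0}"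
    by (intro holomorphic_intros) auto
  show ?thesis by (rule holomorphic_transform[OF hol]) (simp add: eq)
qed

definition contracting :: "complex set" where
  "contracting = {w. w \<noteq> 0 \<and> (if pos then norm w \<le> 1 else 1 \<le> norm w)}"

lemma contracting_nonzero: "w \<in> contracting \<Longrightarrow> w \<noteq> 0"
  by (simp add: contracting_def)

lemma norm_powi_contracting:
  assumes "w \<in> contracting"
  shows "norm (w powi lam j) \<le> 1"
proof (cases pos)
  case True
  then have "norm w ^ nat (lam j) \<le> 1"
    using assms unfolding contracting_def by (simp add: power_le_one)
  then show ?thesis
    using lam_pos[OF True, of j] by (simp add: norm_power_int power_int_def norm_power)
next
  case False
  then have "norm w ^ nat (- lam j) \<ge> 1"
    using assms unfolding contracting_def by (simp add: one_le_power)
  then show ?thesis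
    using lam_neg[OF False, of j]
    by (simp add: norm_power_int power_int_def inverse_le_1_iff power_inverse norm_power
        norm_inverse)
qed

lemma contracting_or_inverse: "z \<noteq> 0 \<Longrightarrow> z \<in> contracting \<or> inverse z \<in> contracting"
  by (auto simp: contracting_def norm_inverse inverse_le_1_iff one_le_inverse_iff)

lemma contracting_root:
  assumes w: "w \<in> contracting" and r: "r > 0"
  obtains w1 k where "w1 \<in> ball 1 r" "w1 \<in> contracting" "w = w1 ^ k"
proof -
  have w0: "w \<noteq> 0" using w by (rule contracting_nonzero)
  have "(\<lambda>k. exp (Ln w / of_nat k)) \<longlonglongrightarrow> exp 0"
    by (intro tendsto_intros)
  from tendstoD[OF this r] have "\<forall>\<^sub>F k in sequentially. dist (exp (Ln w / of_nat k)) 1 < r \<and> k \<ge> 1"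
    using eventually_ge_at_top[of 1] by eventually_elim simp
  then obtain k where k: "dist (exp (Ln w / of_nat k)) 1 < r" "k \<ge> 1"
    unfolding eventually_sequentially by blast
  define w1 where "w1 = exp (Ln w / of_nat k)"
  have "w1 ^ k = exp (of_nat k * (Ln w / of_nat k))"
    unfolding w1_def by (rule exp_of_nat_mult[symmetric])
  also have "\<dots> = w" using k(2) w0 by simp
  finally have pw: "w = w1 ^ k" ..
  have "norm w1 = exp (ln (norm w) / real k)"
    unfolding w1_def using w0 by simp
  then have "w1 \<in> contracting"
    using w w0 by (auto simp: contracting_def divide_nonpos_nonneg)
  moreover have "w1 \<in> ball 1 r" using k(1) by (simp add: w1_def dist_commute)
  ultimately show ?thesis using pw that by blast
qed

definition polydisc :: "real \<Rightarrow> (complex^'n) set" where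
  "polydisc b = {u. \<forall>j. norm (inv P u $ j) < b}"

lemma open_polydisc: "open (polydisc b)"
proof -
  have "polydisc b = inv P -` (\<Inter>j. (\<lambda>v. v $ j) -` ball 0 b)"
    by (auto simp: polydisc_def)
  also have "open \<dots>"
    by (intro continuous_open_vimage linear_continuous_at[OF bounded_linear_inv_P] open_INT finite
        UNIV_I ballI open_vimage_vec_nth open_ball)
  finally show ?thesis .
qed

lemma zero_in_polydisc: "b > 0 \<Longrightarrow> 0 \<in> polydisc b"
  using linear_0[OF bounded_linear.linear[OF bounded_linear_inv_P]] by (simp add: polydisc_def)

lemma polydisc_invariant:
  assumes w: "w \<in> contracting" and u: "u \<in> polydisc b"
  shows "\<psi> w u \<in> polydisc b"
proof -
  have "norm (inv P (\<psi> w u) $ j) < b" for j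
  proof -
    have "norm (inv P (\<psi> w u) $ j) = norm (w powi lam j) * norm (inv P u $ j)"
      using contracting_nonzero[OF w] by (simp add: inv_P_psi diag_def norm_mult)
    also have "\<dots> \<le> norm (inv P u $ j)"
      using norm_powi_contracting[OF w] by (simp add: mult_left_le_one_le)
    also have "\<dots> < b" using u by (simp add: polydisc_def)
    finally show ?thesis .
  qed
  then show ?thesis by (simp add: polydisc_def)
qed

lemma polydisc_subset:
  assumes V: "open V" "0 \<in> V"
  obtains b where "b > 0" "polydisc b \<subseteq> V"
proof -
  have "open (P -` V)"
    using V(1) by (rule continuous_open_vimage) (rule linear_continuous_at[OF bounded_linear_P])
  moreover have "0 \<in> P -` V"
    using V(2) linear_0[OF bounded_linear.linear[OF bounded_linear_P]] by simp
  ultimately obtain g where g: "g > 0" "ball 0 g \<subseteq> P -` V" using open_contains_ball by blast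
  define b where "b = g / real CARD('n)"
  have "polydisc b \<subseteq> V"
  proof
    fix u assume "u \<in> polydisc b"
    then have u: "norm (inv P u $ j) < b" for j by (simp add: polydisc_def)
    have "norm (inv P u) \<le> (\<Sum>j\<in>UNIV. norm (inv P u $ j))"
      unfolding norm_vec_def by (rule L2_set_le_sum) simp
    also have "\<dots> < (\<Sum>j\<in>(UNIV::'n set). b)"
      by (rule sum_strict_mono) (simp_all add: u)
    also have "\<dots> = g" by (simp add: b_def)
    finally have "inv P u \<in> P -` V" using g(2) by auto
    then show "u \<in> V" by simp
  qed
  moreover have "b > 0" using g(1) by (simp add: b_def)
  ultimately show ?thesis using that by blast
qed

lemma psi_power_tendsto_0:
  obtains s where "s \<noteq> 0" "\<And>u. (\<lambda>n. \<psi> (s ^ n) u) \<longlonglongrightarrow> 0"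
proof -
  define s :: complex where "s = (if pos then 1 / 2 else 2)"
  have s0: "s \<noteq> 0" by (simp add: s_def)
  have s_lt: "norm (s powi lam j) < 1" for j
  proof (cases pos)
    case True
    then have "nat (lam j) > 0" using lam_pos[OF True] by simp
    then show ?thesis using True lam_pos[OF True, of j]
      by (simp add: s_def norm_power_int power_int_def power_less_one_iff norm_power)
  next
    case False
    then have "nat (- lam j) > 0" using lam_neg[OF False] by simp
    then show ?thesis using False lam_neg[OF False, of j]
      by (simp add: s_def norm_power_int power_int_def power_inverse norm_power norm_inverse
          power_less_one_iff)
  qed
  have "(\<lambda>n. \<psi> (s ^ n) u) \<longlonglongrightarrow> 0" for u
  proof -
    have "(\<lambda>n. diag (s ^ n) (inv P u)) \<longlonglongrightarrow> (\<chi> j. 0)"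
      unfolding diag_def
    proof (rule tendsto_vec_lambda)
      fix j
      have "(\<lambda>n. (s powi lam j) ^ n * inv P u $ j) \<longlonglongrightarrow> 0"
        by (intro tendsto_mult_left_zero LIMSEQ_power_zero s_lt)
      moreover have "(s ^ n) powi lam j = (s powi lam j) ^ n" for n
        by (simp add: power_int_power power_int_power' mult.commute)
      ultimately show "(\<lambda>n. (s ^ n) powi lam j * inv P u $ j) \<longlonglongrightarrow> 0" by simp
    qed
    then have "(\<lambda>n. P (diag (s ^ n) (inv P u))) \<longlonglongrightarrow> P 0"
      unfolding zero_vec_def[symmetric]
      by (rule isCont_tendsto_compose[OF linear_continuous_at[OF bounded_linear_P]])
    then show ?thesis
      using s0 linear_0[OF bounded_linear.linear[OF bounded_linear_P]] by (simp add: psi_eq)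
  qed
  with s0 show ?thesis by (rule that)
qed

lemma psi_absorbing:
  assumes B: "open B" "0 \<in> B"
  obtains w where "w \<noteq> 0" "\<psi> w u \<in> B"
proof -
  obtain s where s: "s \<noteq> 0" "(\<lambda>n. \<psi> (s ^ n) u) \<longlonglongrightarrow> 0" by (rule psi_power_tendsto_0) blast
  from topological_tendstoD[OF s(2) B] obtain n where "\<psi> (s ^ n) u \<in> B"
    unfolding eventually_sequentially by blast
  moreover have "s ^ n \<noteq> 0" using s(1) by simp
  ultimately show ?thesis by (rule that[rotated])
qed

end

section \<open>Holomorphic \<open>\<complex>\<^sup>*\<close>-actions on complex manifolds\<close>

lemma holo_from_mfdD:
  "holo_from_mfd atlas A T \<Longrightarrow> (U, \<xi>) \<in> atlas \<Longrightarrow> holo (\<xi> ` (U \<inter> A)) (T \<circ> inv_into U \<xi>)"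
  unfolding holo_from_mfd_def by auto

lemma holo_to_mfdD:
  "holo_to_mfd atlas B S \<Longrightarrow> (U, \<xi>) \<in> atlas \<Longrightarrow> holo (B \<inter> S -` U) (\<xi> \<circ> S)"
  unfolding holo_to_mfd_def by auto

locale complex_manifold =
  fixes atlas :: "('m::t2_space set \<times> ('m \<Rightarrow> complex^'n)) set"
  assumes atlas: "complex_atlas atlas"
begin

lemma chart:
  assumes "(U, \<xi>) \<in> atlas"
  shows "open U" "open (\<xi> ` U)" "homeomorphism U (\<xi> ` U) \<xi> (inv_into U \<xi>)"
  using atlas assms unfolding complex_atlas_def by auto

lemma chart_inv [simp]: "(U, \<xi>) \<in> atlas \<Longrightarrow> x \<in> U \<Longrightarrow> inv_into U \<xi> (\<xi> x) = x"
  using chart(3) by (rule homeomorphism_apply1)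

lemma chart_open_image:
  assumes "(U, \<xi>) \<in> atlas" "open V"
  shows "open (\<xi> ` (U \<inter> V))"
proof -
  have "openin (top_of_set U) (U \<inter> V)" using assms(2) by (rule openin_open_Int)
  from homeomorphism_imp_open_map[OF chart(3)[OF assms(1)] this]
  show ?thesis using chart(2)[OF assms(1)] openin_open_trans by blast
qed

lemma chart_cover:
  obtains U \<xi> where "(U, \<xi>) \<in> atlas" "x \<in> U"
proof -
  have "x \<in> \<Union>(fst ` atlas)" using atlas by (simp add: complex_atlas_def)
  then show ?thesis using that by force
qed

lemma holo_transition: "(U, \<xi>) \<in> atlas \<Longrightarrow> (V, \<eta>) \<in> atlas \<Longrightarrow> holo (\<xi> ` (U \<inter> V)) (\<eta> \<circ> inv_into U \<xi>)"
  using atlas unfolding complex_atlas_def by blast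

context
  fixes U :: "'m set" and \<xi> :: "'m \<Rightarrow> complex^'n" and Y B :: "(complex^'n) set"
    and F g :: "complex^'n \<Rightarrow> complex^'n"
  assumes ch: "(U, \<xi>) \<in> atlas" and Y: "open Y" "Y \<subseteq> \<xi> ` U" "holo Y F"
    and hom: "homeomorphism Y B F g" and g: "holo B g"
begin

lemma chart_restrict_inverse:
  assumes "u \<in> B"
  shows "inv_into U \<xi> (g u) \<in> U \<inter> \<xi> -` Y" "(F \<circ> \<xi>) (inv_into U \<xi> (g u)) = u"
proof -
  have "g u \<in> Y" "F (g u) = u" using hom assms by (auto simp: homeomorphism_def)
  moreover have "g u \<in> \<xi> ` U" using \<open>g u \<in> Y\<close> Y(2) by blast
  ultimately show "inv_into U \<xi> (g u) \<in> U \<inter> \<xi> -` Y" "(F \<circ> \<xi>) (inv_into U \<xi> (g u)) = u"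
    by (auto simp: inv_into_into f_inv_into_f)
qed

lemma bij_betw_chart_restrict: "bij_betw (F \<circ> \<xi>) (U \<inter> \<xi> -` Y) B"
  unfolding bij_betw_def
proof (intro conjI inj_onI equalityI subsetI)
  fix x x' assume x: "x \<in> U \<inter> \<xi> -` Y" "x' \<in> U \<inter> \<xi> -` Y" and "(F \<circ> \<xi>) x = (F \<circ> \<xi>) x'"
  then have "\<xi> x = \<xi> x'" using hom by (metis IntD2 comp_apply homeomorphism_apply1 vimageD)
  then show "x = x'" using x ch by (metis IntD1 chart_inv)
next
  show "u \<in> B" if "u \<in> (F \<circ> \<xi>) ` (U \<inter> \<xi> -` Y)" for u
    using that hom by (auto simp: homeomorphism_def)
  show "u \<in> (F \<circ> \<xi>) ` (U \<inter> \<xi> -` Y)" if "u \<in> B" for u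
    using chart_restrict_inverse[OF that] by (metis image_eqI)
qed

lemma inv_into_chart_restrict:
  "u \<in> B \<Longrightarrow> inv_into (U \<inter> \<xi> -` Y) (F \<circ> \<xi>) u = inv_into U \<xi> (g u)"
  using bij_betw_chart_restrict chart_restrict_inverse
  by (intro inv_into_f_eq) (auto simp: bij_betw_def)

lemma open_chart_restrict: "open (U \<inter> \<xi> -` Y)"
  using chart(3)[OF ch]
  by (intro continuous_open_preimage chart(1)[OF ch] Y(1)) (simp add: homeomorphism_def)

lemma holo_from_mfd_chart_restrict: "holo_from_mfd atlas (U \<inter> \<xi> -` Y) (F \<circ> \<xi>)"
  unfolding holo_from_mfd_def
proof (intro conjI open_chart_restrict ballI, clarify)
  fix U1 \<xi>1 assume ch1: "(U1, \<xi>1) \<in> atlas"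
  have "holo (\<xi>1 ` (U1 \<inter> U) \<inter> (\<xi> \<circ> inv_into U1 \<xi>1) -` Y) (F \<circ> (\<xi> \<circ> inv_into U1 \<xi>1))"
    by (rule holo_compose[OF holo_transition[OF ch1 ch] Y(3)])
  moreover have "\<xi>1 ` (U1 \<inter> U) \<inter> (\<xi> \<circ> inv_into U1 \<xi>1) -` Y = \<xi>1 ` (U1 \<inter> (U \<inter> \<xi> -` Y))"
    using ch1 by auto
  ultimately show "holo (\<xi>1 ` (U1 \<inter> (U \<inter> \<xi> -` Y))) (F \<circ> \<xi> \<circ> inv_into U1 \<xi>1)"
    by (simp add: o_assoc)
qed

lemma holo_to_mfd_chart_restrict: "holo_to_mfd atlas B (inv_into (U \<inter> \<xi> -` Y) (F \<circ> \<xi>))"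
proof -
  let ?S = "inv_into (U \<inter> \<xi> -` Y) (F \<circ> \<xi>)"
  have oB: "open B" using g by (simp add: holo_def)
  have "continuous_on B (\<lambda>u. inv_into U \<xi> (g u))"
    using chart(3)[OF ch] hom Y(2)
    by (intro continuous_on_compose2[OF _ holo_continuous_on[OF g]]) (auto simp: homeomorphism_def)
  then have cont: "continuous_on B ?S"
    by (rule continuous_on_eq) (simp add: inv_into_chart_restrict)
  show ?thesis
    unfolding holo_to_mfd_def
  proof (intro conjI oB cont ballI, clarify)
    fix U2 \<xi>2 assume ch2: "(U2, \<xi>2) \<in> atlas"
    have "holo (B \<inter> g -` (\<xi> ` (U \<inter> U2))) ((\<xi>2 \<circ> inv_into U \<xi>) \<circ> g)"
      by (rule holo_compose[OF g holo_transition[OF ch ch2]])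
    then show "holo (B \<inter> ?S -` U2) (\<xi>2 \<circ> ?S)"
    proof (rule holo_transform)
      show "open (B \<inter> ?S -` U2)" by (rule continuous_open_preimage[OF cont oB chart(1)[OF ch2]])
      show "B \<inter> ?S -` U2 \<subseteq> B \<inter> g -` (\<xi> ` (U \<inter> U2))"
      proof
        fix u assume "u \<in> B \<inter> ?S -` U2"
        then have u: "u \<in> B" "inv_into U \<xi> (g u) \<in> U2" by (auto simp: inv_into_chart_restrict)
        have "g u \<in> \<xi> ` U" using hom Y(2) u(1) by (auto simp: homeomorphism_def)
        then have "g u = \<xi> (inv_into U \<xi> (g u))" "inv_into U \<xi> (g u) \<in> U"
          by (simp_all add: f_inv_into_f inv_into_into)
        then have "g u \<in> \<xi> ` (U \<inter> U2)" using u(2) by blast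
        then show "u \<in> B \<inter> g -` (\<xi> ` (U \<inter> U2))" using u(1) by simp
      qed
    qed (simp add: inv_into_chart_restrict)
  qed
qed

lemma biholomorphism_chart_restrict: "biholomorphism atlas (U \<inter> \<xi> -` Y) B (F \<circ> \<xi>)"
  unfolding biholomorphism_def
  using bij_betw_chart_restrict holo_from_mfd_chart_restrict holo_to_mfd_chart_restrict by blast

end

end

locale Cstar_manifold = complex_manifold atlas
  for atlas :: "('m::t2_space set \<times> ('m \<Rightarrow> complex^'n)) set" +
  fixes \<phi> :: "complex \<Rightarrow> 'm \<Rightarrow> 'm"
  assumes action: "holomorphic_Cstar_action atlas \<phi>"
begin

lemma action_1 [simp]: "\<phi> 1 x = x"
  using action by (simp add: holomorphic_Cstar_action_def)

lemma action_mult: "z \<noteq> 0 \<Longrightarrow> w \<noteq> 0 \<Longrightarrow> \<phi> (z * w) x = \<phi> z (\<phi> w x)"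
  using action by (simp add: holomorphic_Cstar_action_def)

lemma action_inverse: "w \<noteq> 0 \<Longrightarrow> \<phi> (inverse w) (\<phi> w x) = x"
  using action_mult[of "inverse w" w x] by simp

lemma continuous_on_action: "z \<noteq> 0 \<Longrightarrow> continuous_on UNIV (\<phi> z)"
proof -
  assume "z \<noteq> 0"
  have "continuous_on ((- {0}) \<times> UNIV) (\<lambda>(z, x). \<phi> z x)"
    using action by (simp add: holomorphic_Cstar_action_def)
  then have "continuous_on UNIV (\<lambda>x. (\<lambda>(z, x). \<phi> z x) (z, x))"
    by (rule continuous_on_compose2) (use \<open>z \<noteq> 0\<close> in \<open>auto intro!: continuous_intros\<close>)
  then show ?thesis by simp
qed

lemma holo2_action:
  "(U1, \<xi>1) \<in> atlas \<Longrightarrow> (U2, \<xi>2) \<in> atlas \<Longrightarrow>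
    holo2 {(z, y). z \<noteq> 0 \<and> y \<in> \<xi>1 ` U1 \<and> \<phi> z (inv_into U1 \<xi>1 y) \<in> U2}
      (\<lambda>(z, y). \<xi>2 (\<phi> z (inv_into U1 \<xi>1 y)))"
  using action unfolding holomorphic_Cstar_action_def by blast

lemma holo_action:
  assumes "(U1, \<xi>1) \<in> atlas" "(U2, \<xi>2) \<in> atlas" "z \<noteq> 0"
  shows "holo {y \<in> \<xi>1 ` U1. \<phi> z (inv_into U1 \<xi>1 y) \<in> U2} (\<lambda>y. \<xi>2 (\<phi> z (inv_into U1 \<xi>1 y)))"
  using holo2_slice[OF holo2_action[OF assms(1,2)], of z] assms(3) by simp

end

section \<open>Globalization\<close>

locale local_linearization = Cstar_manifold atlas \<phi> + dicritical_action \<psi> P lam pos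
  for atlas :: "('m::t2_space set \<times> ('m \<Rightarrow> complex^'n)) set" and \<phi>
    and \<psi> :: "complex \<Rightarrow> complex^'n \<Rightarrow> complex^'n" and P lam pos +
  fixes p :: 'm and W :: "'m set" and S :: "'m \<Rightarrow> complex^'n" and B :: "(complex^'n) set"
  assumes W: "open W" "p \<in> W" and S_p: "S p = 0" and S_biholo: "biholomorphism atlas W B S"
    and W_invariant: "\<And>w x. w \<in> contracting \<Longrightarrow> x \<in> W \<Longrightarrow> \<phi> w x \<in> W"
    and S_equivariant: "\<And>w x. w \<in> contracting \<Longrightarrow> x \<in> W \<Longrightarrow> S (\<phi> w x) = \<psi> w (S x)"
begin

lemma S_bij: "bij_betw S W B"
  and S_holo: "holo_from_mfd atlas W S" and S_inv_holo: "holo_to_mfd atlas B (inv_into W S)"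
  using S_biholo by (simp_all add: biholomorphism_def)

lemma open_B: "open B"
  using S_inv_holo by (simp add: holo_to_mfd_def)

definition saturation :: "'m set" where
  "saturation = {x. \<exists>w. w \<noteq> 0 \<and> \<phi> w x \<in> W}"

definition linearization :: "'m \<Rightarrow> complex^'n" where
  "linearization x = (let w = SOME w. w \<noteq> 0 \<and> \<phi> w x \<in> W in \<psi> (inverse w) (S (\<phi> w x)))"

lemma rescale:
  assumes w: "w \<noteq> 0" "\<phi> w x \<in> W" and w': "w' / w \<in> contracting"
  shows "\<phi> w' x \<in> W" "\<psi> (inverse w') (S (\<phi> w' x)) = \<psi> (inverse w) (S (\<phi> w x))"
proof -
  have w'0: "w' \<noteq> 0" using contracting_nonzero[OF w'] by simp
  have e: "\<phi> w' x = \<phi> (w' / w) (\<phi> w x)" using w w'0 action_mult[of "w' / w" w x] by simp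
  show "\<phi> w' x \<in> W" unfolding e by (rule W_invariant[OF w' w(2)])
  have "\<psi> (inverse w') (S (\<phi> w' x)) = \<psi> (inverse w' * (w' / w)) (S (\<phi> w x))"
    unfolding e S_equivariant[OF w' w(2)] using w w'0 by (simp add: psi_mult)
  also have "inverse w' * (w' / w) = inverse w" using w'0 by (simp add: field_simps)
  finally show "\<psi> (inverse w') (S (\<phi> w' x)) = \<psi> (inverse w) (S (\<phi> w x))" .
qed

lemma linearization_eq:
  assumes w: "w \<noteq> 0" "\<phi> w x \<in> W"
  shows "linearization x = \<psi> (inverse w) (S (\<phi> w x))"
proof -
  define w' where "w' = (SOME w. w \<noteq> 0 \<and> \<phi> w x \<in> W)"
  have w': "w' \<noteq> 0" "\<phi> w' x \<in> W" using someI[of "\<lambda>w. w \<noteq> 0 \<and> \<phi> w x \<in> W"] w by (auto simp: w'_def)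
  have "linearization x = \<psi> (inverse w') (S (\<phi> w' x))"
    by (simp add: linearization_def w'_def Let_def)
  also have "\<dots> = \<psi> (inverse w) (S (\<phi> w x))"
    using contracting_or_inverse[of "w / w'"] w w' rescale[OF w] rescale[OF w']
    by (auto simp: inverse_eq_divide)
  finally show ?thesis .
qed

lemma common_time:
  assumes "x \<in> saturation" "x' \<in> saturation"
  obtains w where "w \<noteq> 0" "\<phi> w x \<in> W" "\<phi> w x' \<in> W"
proof -
  obtain w1 w2 where w: "w1 \<noteq> 0" "\<phi> w1 x \<in> W" "w2 \<noteq> 0" "\<phi> w2 x' \<in> W"
    using assms by (auto simp: saturation_def)
  show ?thesis
  proof (cases "w2 / w1 \<in> contracting")
    case True
    then show ?thesis using that[of w2] rescale(1)[OF w(1,2)] w by blast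
  next
    case False
    then have "w1 / w2 \<in> contracting"
      using contracting_or_inverse[of "w2 / w1"] w by (auto simp: inverse_eq_divide)
    then show ?thesis using that[of w1] rescale(1)[OF w(3,4)] w by blast
  qed
qed

lemma open_saturation: "open saturation"
proof -
  have "saturation = (\<Union>w\<in>- {0}. \<phi> w -` W)" by (auto simp: saturation_def)
  moreover have "open (\<phi> w -` W)" if "w \<in> - {0}" for w
    using continuous_on_action[of w] that W(1) by (auto intro: open_vimage)
  ultimately show ?thesis by (metis open_UN)
qed

lemma p_in_saturation: "p \<in> saturation"
  using W(2) by (auto simp: saturation_def intro!: exI[of _ 1])

lemma saturation_invariant: "z \<noteq> 0 \<Longrightarrow> x \<in> saturation \<Longrightarrow> \<phi> z x \<in> saturation"
proof -
  assume z: "z \<noteq> 0" and "x \<in> saturation"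
  then obtain w where w: "w \<noteq> 0" "\<phi> w x \<in> W" by (auto simp: saturation_def)
  then have "\<phi> (w / z) (\<phi> z x) \<in> W" using z action_mult[of "w / z" z x] by simp
  then show ?thesis using w z unfolding saturation_def by (intro CollectI exI[of _ "w / z"]) simp
qed

lemma linearization_equivariant:
  assumes z: "z \<noteq> 0" and x: "x \<in> saturation"
  shows "linearization (\<phi> z x) = \<psi> z (linearization x)"
proof -
  obtain w where w: "w \<noteq> 0" "\<phi> w x \<in> W" using x by (auto simp: saturation_def)
  have e: "\<phi> (w / z) (\<phi> z x) = \<phi> w x" using z w action_mult[of "w / z" z x] by simp
  have "linearization (\<phi> z x) = \<psi> (inverse (w / z)) (S (\<phi> w x))"
    using linearization_eq[of "w / z" "\<phi> z x"] e w z by simp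
  also have "\<dots> = \<psi> z (\<psi> (inverse w) (S (\<phi> w x)))"
    using z w by (simp add: psi_mult field_simps)
  finally show ?thesis using linearization_eq[OF w] by simp
qed

lemma inj_on_linearization: "inj_on linearization saturation"
proof
  fix x x' assume x: "x \<in> saturation" "x' \<in> saturation" and eq: "linearization x = linearization x'"
  obtain w where w: "w \<noteq> 0" "\<phi> w x \<in> W" "\<phi> w x' \<in> W" using common_time[OF x] .
  have "S (\<phi> w x) = S (\<phi> w x')"
    using eq linearization_eq[OF w(1,2)] linearization_eq[OF w(1,3)] psi_inverse'[OF w(1)] by metis
  then have "\<phi> w x = \<phi> w x'" using S_bij w(2,3) by (auto simp: bij_betw_def inj_on_def)
  then show "x = x'" using action_inverse[OF w(1)] by metis
qed

lemma linearization_inverse: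
  assumes w: "w \<noteq> 0" "\<psi> w u \<in> B"
  shows "\<phi> (inverse w) (inv_into W S (\<psi> w u)) \<in> saturation"
    and "linearization (\<phi> (inverse w) (inv_into W S (\<psi> w u))) = u"
    and "inv_into saturation linearization u = \<phi> (inverse w) (inv_into W S (\<psi> w u))"
proof -
  define x where "x = inv_into W S (\<psi> w u)"
  have x: "x \<in> W" "S x = \<psi> w u"
    using w(2) S_bij by (auto simp: x_def bij_betw_def inv_into_into f_inv_into_f)
  have e: "\<phi> w (\<phi> (inverse w) x) = x" using action_mult[of w "inverse w" x] w(1) by simp
  show sat: "\<phi> (inverse w) x \<in> saturation" using e x w(1) by (auto simp: saturation_def)
  show lin: "linearization (\<phi> (inverse w) x) = u"
    using linearization_eq[of w] e x w(1) by (simp add: psi_inverse)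
  show "inv_into saturation linearization u = \<phi> (inverse w) x"
    by (rule inv_into_f_eq[OF inj_on_linearization sat lin])
qed

lemma zero_in_B: "0 \<in> B"
  using S_bij W(2) S_p by (auto simp: bij_betw_def)

lemma linearization_surj: "linearization ` saturation = UNIV"
proof -
  have "u \<in> linearization ` saturation" for u
  proof -
    obtain w where "w \<noteq> 0" "\<psi> w u \<in> B" using psi_absorbing[OF open_B zero_in_B] .
    from linearization_inverse(1,2)[OF this] show ?thesis by (metis image_eqI)
  qed
  then show ?thesis by auto
qed

lemma holo_from_mfd_linearization: "holo_from_mfd atlas saturation linearization"
  unfolding holo_from_mfd_def
proof (intro conjI open_saturation ballI, clarify)
  fix U1 \<xi>1 assume ch1: "(U1, \<xi>1) \<in> atlas"
  show "holo (\<xi>1 ` (U1 \<inter> saturation)) (linearization \<circ> inv_into U1 \<xi>1)"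
  proof (rule holo_locally)
    show "open (\<xi>1 ` (U1 \<inter> saturation))" by (rule chart_open_image[OF ch1 open_saturation])
    fix y0 assume "y0 \<in> \<xi>1 ` (U1 \<inter> saturation)"
    then obtain x0 where x0: "x0 \<in> U1" "x0 \<in> saturation" "y0 = \<xi>1 x0" by auto
    then obtain w where w: "w \<noteq> 0" "\<phi> w x0 \<in> W" by (auto simp: saturation_def)
    obtain U2 \<xi>2 where ch2: "(U2, \<xi>2) \<in> atlas" "\<phi> w x0 \<in> U2" by (rule chart_cover)
    define H where "H y = \<xi>2 (\<phi> w (inv_into U1 \<xi>1 y))" for y
    define N where "N = {y \<in> \<xi>1 ` U1. \<phi> w (inv_into U1 \<xi>1 y) \<in> U2} \<inter> H -` (\<xi>2 ` (U2 \<inter> W))"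
    have "holo N ((S \<circ> inv_into U2 \<xi>2) \<circ> H)"
      unfolding N_def H_def
      by (rule holo_compose[OF holo_action[OF ch1 ch2(1) w(1)] holo_from_mfdD[OF S_holo ch2(1)]])
    moreover have "inverse w \<noteq> 0" using w(1) by simp
    ultimately have "holo N (\<psi> (inverse w) \<circ> ((S \<circ> inv_into U2 \<xi>2) \<circ> H))"
      by (rule holo_compose_linear[OF _ complex_linear_psi])
    moreover have "y0 \<in> N"
      using x0 w ch1 ch2 by (auto simp: N_def H_def)
    moreover have
      "(\<psi> (inverse w) \<circ> ((S \<circ> inv_into U2 \<xi>2) \<circ> H)) y = (linearization \<circ> inv_into U1 \<xi>1) y"
      if "y \<in> N" for y
    proof -
      let ?x = "inv_into U1 \<xi>1 y"
      have "H y \<in> \<xi>2 ` (U2 \<inter> W)" using that by (simp add: N_def)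
      then obtain x' where x': "x' \<in> U2" "x' \<in> W" "H y = \<xi>2 x'" by blast
      have "\<phi> w ?x \<in> U2" using that by (simp add: N_def)
      then have "inv_into U2 \<xi>2 (H y) = \<phi> w ?x" using ch2(1) by (simp add: H_def)
      moreover have "inv_into U2 \<xi>2 (H y) = x'" using x' ch2(1) by simp
      ultimately show ?thesis using linearization_eq[of w ?x] w(1) x'(2) by simp
    qed
    ultimately show "\<exists>N g. y0 \<in> N \<and> holo N g \<and> (\<forall>y\<in>N. g y = (linearization \<circ> inv_into U1 \<xi>1) y)"
      by blast
  qed
qed

lemma continuous_on_linearization_inverse: "continuous_on UNIV (inv_into saturation linearization)"
proof (rule continuous_at_imp_continuous_on, intro ballI)
  fix u0 :: "complex^'n"
  obtain w where w: "w \<noteq> 0" "\<psi> w u0 \<in> B" by (rule psi_absorbing[OF open_B zero_in_B])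
  note eq = linearization_inverse(3)[OF w(1)]
  have "open (\<psi> w -` B)"
    using open_B
    by (rule continuous_open_vimage) (rule linear_continuous_at[OF bounded_linear_psi[OF w(1)]])
  then have ev: "\<forall>\<^sub>F u in nhds u0.
      inv_into saturation linearization u = \<phi> (inverse w) (inv_into W S (\<psi> w u))"
    using w(2) eq unfolding eventually_nhds by blast
  moreover have "isCont (\<lambda>u. \<phi> (inverse w) (inv_into W S (\<psi> w u))) u0"
  proof -
    have "isCont (\<psi> w) u0" by (rule linear_continuous_at[OF bounded_linear_psi[OF w(1)]])
    moreover have "isCont (inv_into W S) (\<psi> w u0)"
      using S_inv_holo open_B w(2) by (simp add: holo_to_mfd_def continuous_on_eq_continuous_at)
    moreover have "isCont (\<phi> (inverse w)) (inv_into W S (\<psi> w u0))"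
      using continuous_on_action[of "inverse w"] w(1) by (simp add: continuous_on_eq_continuous_at)
    ultimately show ?thesis by (rule isCont_o2[OF isCont_o2])
  qed
  ultimately show "isCont (inv_into saturation linearization) u0"
    using isCont_cong[OF ev] by simp
qed

lemma holo_to_mfd_linearization_inverse:
  "holo_to_mfd atlas UNIV (inv_into saturation linearization)"
  unfolding holo_to_mfd_def
proof (intro conjI open_UNIV continuous_on_linearization_inverse ballI, clarify)
  fix U2 \<xi>2 assume ch2: "(U2, \<xi>2) \<in> atlas"
  let ?L = "inv_into saturation linearization"
  show "holo (UNIV \<inter> ?L -` U2) (\<xi>2 \<circ> ?L)"
  proof (rule holo_locally)
    show "open (UNIV \<inter> ?L -` U2)"
      using open_vimage[OF chart(1)[OF ch2] continuous_on_linearization_inverse] by simp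
    fix u0 assume u0: "u0 \<in> UNIV \<inter> ?L -` U2"
    obtain w where w: "w \<noteq> 0" "\<psi> w u0 \<in> B" by (rule psi_absorbing[OF open_B zero_in_B])
    note eq = linearization_inverse(3)[OF w(1)]
    have iw: "inverse w \<noteq> 0" using w(1) by simp
    define x1 where "x1 = inv_into W S (\<psi> w u0)"
    have "x1 \<in> W" using w(2) S_bij by (simp add: x1_def bij_betw_def inv_into_into)
    obtain U1 \<xi>1 where ch1: "(U1, \<xi>1) \<in> atlas" "x1 \<in> U1" by (rule chart_cover)
    define H where "H y = \<xi>2 (\<phi> (inverse w) (inv_into U1 \<xi>1 y))" for y
    define N where "N = (UNIV \<inter> \<psi> w -` (B \<inter> inv_into W S -` U1)) \<inter>
      ((\<xi>1 \<circ> inv_into W S) \<circ> \<psi> w) -` {y \<in> \<xi>1 ` U1. \<phi> (inverse w) (inv_into U1 \<xi>1 y) \<in> U2}"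
    note h1 = holo_to_mfdD[OF S_inv_holo ch1(1)]
    have "holo (UNIV \<inter> \<psi> w -` (B \<inter> inv_into W S -` U1)) ((\<xi>1 \<circ> inv_into W S) \<circ> \<psi> w)"
      by (rule holo_compose[OF holo_complex_linear[OF open_UNIV complex_linear_psi[OF w(1)]] h1])
    from holo_compose[OF this holo_action[OF ch1(1) ch2 iw]]
    have "holo N (H \<circ> ((\<xi>1 \<circ> inv_into W S) \<circ> \<psi> w))" unfolding N_def H_def .
    moreover have "u0 \<in> N"
      using w(2) ch1 u0 eq[OF w(2)] by (simp add: N_def x1_def[symmetric])
    moreover have "(H \<circ> ((\<xi>1 \<circ> inv_into W S) \<circ> \<psi> w)) u = (\<xi>2 \<circ> ?L) u" if "u \<in> N" for u
      using that ch1(1) eq by (simp add: N_def H_def)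
    ultimately show "\<exists>N g. u0 \<in> N \<and> holo N g \<and> (\<forall>u\<in>N. g u = (\<xi>2 \<circ> ?L) u)"
      by blast
  qed
qed

lemma global_linearization:
  "\<exists>A T. open A \<and> p \<in> A \<and> (\<forall>z. z \<noteq> 0 \<longrightarrow> \<phi> z ` A \<subseteq> A) \<and> biholomorphism atlas A UNIV T \<and>
     (\<forall>z. z \<noteq> 0 \<longrightarrow> (\<forall>x\<in>A. \<psi> z (T x) = T (\<phi> z x)))"
proof (intro exI conjI allI impI ballI)
  show "biholomorphism atlas saturation UNIV linearization"
    unfolding biholomorphism_def bij_betw_def
    using inj_on_linearization linearization_surj holo_from_mfd_linearization
      holo_to_mfd_linearization_inverse by blast
  show "\<psi> z (linearization x) = linearization (\<phi> z x)" if "z \<noteq> 0" "x \<in> saturation" for z x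
    using linearization_equivariant[OF that] by simp
qed (use open_saturation p_in_saturation saturation_invariant in auto)

end

section \<open>Linearization at a dicritical fixed point\<close>

locale dicritical_fixed_point =
  Cstar_manifold atlas \<phi> + dicritical_action "derivative_action \<xi> U \<phi> p" P lam pos
  for atlas :: "('m::t2_space set \<times> ('m \<Rightarrow> complex^'n)) set" and \<phi> p
    and U :: "'m set" and \<xi> :: "'m \<Rightarrow> complex^'n" and P lam pos +
  assumes fixed: "\<And>z. z \<noteq> 0 \<Longrightarrow> \<phi> z p = p" and chart_p: "(U, \<xi>) \<in> atlas" "p \<in> U"
begin

abbreviation "\<psi> \<equiv> derivative_action \<xi> U \<phi> p"

definition "c = \<xi> p"

definition "chart_act = (\<lambda>(z, y). \<xi> (\<phi> z (inv_into U \<xi> y)))"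

definition "chart_dom = {(z, y). z \<noteq> 0 \<and> y \<in> \<xi> ` U \<and> \<phi> z (inv_into U \<xi> y) \<in> U}"

lemma holo2_chart_act: "holo2 chart_dom chart_act"
  unfolding chart_dom_def chart_act_def by (rule holo2_action[OF chart_p(1) chart_p(1)])

lemma open_chart_dom: "open chart_dom"
  using holo2_chart_act by (simp add: holo2_def)

lemma continuous_on_chart_act: "continuous_on chart_dom chart_act"
  by (rule holo2_continuous[OF holo2_chart_act])

lemma chart_act_c: "z \<noteq> 0 \<Longrightarrow> (z, c) \<in> chart_dom" "z \<noteq> 0 \<Longrightarrow> chart_act (z, c) = c"
  using chart_p fixed by (simp_all add: chart_dom_def chart_act_def c_def)

lemma slice_deriv_chart_act_c: "z \<noteq> 0 \<Longrightarrow> slice_deriv chart_act z c = \<psi> z"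
  unfolding slice_deriv_def derivative_action_def c_def chart_act_def by (simp add: o_def)

lemma chart_act_1: "y \<in> \<xi> ` U \<Longrightarrow> (1, y) \<in> chart_dom" "y \<in> \<xi> ` U \<Longrightarrow> chart_act (1, y) = y"
  by (auto simp: chart_dom_def chart_act_def inv_into_into f_inv_into_f)

lemma chart_dom_fst: "(z, y) \<in> chart_dom \<Longrightarrow> y \<in> \<xi> ` U"
  by (simp add: chart_dom_def)

lemma chart_act_mult:
  assumes "(w, y) \<in> chart_dom" "z \<noteq> 0"
  shows "chart_act (z, chart_act (w, y)) = chart_act (z * w, y)"
    and "(z, chart_act (w, y)) \<in> chart_dom \<Longrightarrow> (z * w, y) \<in> chart_dom"
  using assms chart_p(1) by (auto simp: chart_dom_def chart_act_def action_mult)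

definition circle_dom :: "(complex^'n) set" where
  "circle_dom = {y. \<forall>w\<in>sphere 0 1. (w, y) \<in> chart_dom}"

lemma open_circle_dom: "open circle_dom"
  unfolding open_contains_ball
proof
  fix y assume "y \<in> circle_dom"
  then have "sphere 0 1 \<times> {y} \<subseteq> chart_dom" by (auto simp: circle_dom_def)
  then obtain d where "d > 0" "sphere 0 1 \<times> ball y d \<subseteq> chart_dom"
    by (rule compact_times_ball_subset[OF compact_sphere open_chart_dom])
  then show "\<exists>d>0. ball y d \<subseteq> circle_dom" by (auto simp: circle_dom_def)
qed

lemma c_in_circle_dom: "c \<in> circle_dom"
proof -
  have "w \<noteq> 0" if "w \<in> sphere 0 1" for w :: complex using that by auto
  then show ?thesis using chart_act_c(1) by (auto simp: circle_dom_def)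
qed

lemma e2pi_in_chart_dom: "y \<in> circle_dom \<Longrightarrow> (e2pi t, y) \<in> chart_dom"
  by (simp add: circle_dom_def)

lemma circle_dom_subset: "circle_dom \<subseteq> \<xi> ` U"
proof
  fix y assume "y \<in> circle_dom"
  then have "(1, y) \<in> chart_dom" by (simp add: circle_dom_def)
  then show "y \<in> \<xi> ` U" by (rule chart_dom_fst)
qed

definition "avg_integrand y t = \<psi> (e2pi (- t)) (chart_act (e2pi t, y) - c)"

definition "avg y = integral {0..1} (avg_integrand y)"

definition "avg_integrand_deriv y t =
  Blinfun (\<lambda>v. \<psi> (e2pi (- t)) (slice_deriv chart_act (e2pi t) y v))"

definition "avg_deriv y = integral {0..1} (avg_integrand_deriv y)"

lemma avg_integrand_deriv_apply:
  assumes "y \<in> circle_dom"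
  shows "avg_integrand_deriv y t v = \<psi> (e2pi (- t)) (slice_deriv chart_act (e2pi t) y v)"
proof -
  have "bounded_linear (slice_deriv chart_act (e2pi t) y)"
    using holo2_slice_deriv(1)[OF holo2_chart_act e2pi_in_chart_dom[OF assms]]
    by (rule has_derivative_bounded_linear)
  from bounded_linear_compose[OF bounded_linear_psi[OF e2pi_nonzero] this]
  show ?thesis unfolding avg_integrand_deriv_def by (simp add: bounded_linear_Blinfun_apply)
qed

lemma avg_integrand_has_derivative:
  "y \<in> circle_dom \<Longrightarrow> ((\<lambda>y. avg_integrand y t) has_derivative avg_integrand_deriv y t) (at y)"
proof -
  assume y: "y \<in> circle_dom"
  have "((\<lambda>y. chart_act (e2pi t, y) - c) has_derivative slice_deriv chart_act (e2pi t) y) (at y)"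
    using holo2_slice_deriv(1)[OF holo2_chart_act e2pi_in_chart_dom[OF y]]
    by (auto intro!: derivative_eq_intros)
  from bounded_linear.has_derivative[OF bounded_linear_psi[OF e2pi_nonzero[of "- t"]] this]
  moreover have "blinfun_apply (avg_integrand_deriv y t) =
      (\<lambda>v. \<psi> (e2pi (- t)) (slice_deriv chart_act (e2pi t) y v))"
    using avg_integrand_deriv_apply[OF y] by (intro ext) simp
  ultimately show ?thesis unfolding avg_integrand_def by simp
qed

lemma avg_integrand_deriv_scale:
  "y \<in> circle_dom \<Longrightarrow> avg_integrand_deriv y t (a *s v) = a *s avg_integrand_deriv y t v"
  by (simp add: avg_integrand_deriv_apply psi_scale
      holo2_slice_deriv(2)[OF holo2_chart_act e2pi_in_chart_dom])

lemma continuous_on_avg_integrand: "y \<in> circle_dom \<Longrightarrow> continuous_on T (avg_integrand y)"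
proof -
  assume y: "y \<in> circle_dom"
  have "continuous_on T (\<lambda>t. chart_act (e2pi t, y))"
    by (rule continuous_on_compose2[OF continuous_on_chart_act])
      (auto intro!: continuous_intros e2pi_in_chart_dom[OF y])
  then show ?thesis unfolding avg_integrand_def by (intro continuous_intros) auto
qed

lemma continuous_on_avg_integrand_deriv:
  "continuous_on (circle_dom \<times> T) (\<lambda>(y, t). avg_integrand_deriv y t)"
  unfolding continuous_on_eq_continuous_within
proof
  fix q assume q: "q \<in> circle_dom \<times> T"
  show "continuous (at q within circle_dom \<times> T) (\<lambda>(y, t). avg_integrand_deriv y t)"
  proof (rule continuous_blinfun_componentwiseI1)
    fix v :: "complex^'n"
    have "continuous_on (circle_dom \<times> T)
        (\<lambda>x. slice_deriv chart_act (fst (e2pi (snd x), fst x)) (snd (e2pi (snd x), fst x)) v)"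
      by (rule continuous_on_compose2[OF continuous_on_slice_deriv[OF holo2_chart_act]])
        (auto intro!: continuous_intros e2pi_in_chart_dom)
    then have "continuous_on (circle_dom \<times> T)
        (\<lambda>x. \<psi> (e2pi (- snd x)) (slice_deriv chart_act (e2pi (snd x)) (fst x) v))"
      by (intro continuous_intros) auto
    then have "continuous_on (circle_dom \<times> T) (\<lambda>x. (\<lambda>(y, t). avg_integrand_deriv y t) x v)"
      by (rule continuous_on_eq) (auto simp: avg_integrand_deriv_apply)
    then show "continuous (at q within circle_dom \<times> T) (\<lambda>x. (\<lambda>(y, t). avg_integrand_deriv y t) x v)"
      using q continuous_on_eq_continuous_within by blast
  qed
qed

lemma avg_has_derivative: "y \<in> circle_dom \<Longrightarrow> (avg has_derivative avg_deriv y) (at y)"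
  unfolding avg_def[abs_def] avg_deriv_def
  by (rule has_derivative_integral_param[OF open_circle_dom _ avg_integrand_has_derivative
        integrable_continuous_interval[OF continuous_on_avg_integrand]
        continuous_on_avg_integrand_deriv])

lemma avg_deriv_scale: "y \<in> circle_dom \<Longrightarrow> avg_deriv y (a *s v) = a *s avg_deriv y v"
  unfolding avg_deriv_def
proof (rule integral_blinfun_vector_smult)
  assume y: "y \<in> circle_dom"
  have "continuous_on {0..1} (\<lambda>t. (\<lambda>(y, t). avg_integrand_deriv y t) (y, t))"
    by (rule continuous_on_compose2[OF continuous_on_avg_integrand_deriv])
      (use y in \<open>auto intro!: continuous_intros\<close>)
  then show "continuous_on {0..1} (avg_integrand_deriv y)" by simp
qed (rule avg_integrand_deriv_scale)

lemma continuous_on_avg_deriv: "continuous_on circle_dom avg_deriv"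
  unfolding avg_deriv_def cbox_interval[symmetric]
  by (rule integral_continuous_on_param[OF continuous_on_avg_integrand_deriv])

lemma avg_c: "avg c = 0"
proof -
  have "avg_integrand c = (\<lambda>t. 0)" by (simp add: avg_integrand_def chart_act_c fun_eq_iff)
  then show ?thesis by (simp add: avg_def)
qed

lemma avg_deriv_c: "avg_deriv c = id_blinfun"
proof -
  have "avg_integrand_deriv c = (\<lambda>t. id_blinfun)"
    by (intro ext blinfun_eqI)
      (simp add: avg_integrand_deriv_apply[OF c_in_circle_dom] slice_deriv_chart_act_c psi_mult
        e2pi_minus)
  then show ?thesis by (simp add: avg_deriv_def)
qed

lemma holo_avg: "holo circle_dom avg"
  unfolding holo_def using open_circle_dom avg_has_derivative avg_deriv_scale by blast

lemma avg_equivariant_circle: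
  assumes y: "y \<in> circle_dom" and s: "0 \<le> s" "s \<le> 1"
  shows "avg (chart_act (e2pi s, y)) = \<psi> (e2pi s) (avg y)"
proof -
  have shift: "avg_integrand (chart_act (e2pi s, y)) = (\<lambda>t. \<psi> (e2pi s) (avg_integrand y (t + s)))"
  proof
    fix t
    have "chart_act (e2pi t, chart_act (e2pi s, y)) = chart_act (e2pi (t + s), y)"
      by (simp add: chart_act_mult(1)[OF e2pi_in_chart_dom[OF y]] e2pi_add)
    moreover have "\<psi> (e2pi (- t)) u = \<psi> (e2pi s) (\<psi> (e2pi (- (t + s))) u)" for u
      by (simp add: psi_mult e2pi_add[symmetric])
    ultimately show "avg_integrand (chart_act (e2pi s, y)) t = \<psi> (e2pi s) (avg_integrand y (t + s))"
      by (simp add: avg_integrand_def)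
  qed
  have cont: "continuous_on {0..1} (\<lambda>t. avg_integrand y (t + s))"
    by (rule continuous_on_compose2[OF continuous_on_avg_integrand[OF y, of UNIV]])
      (auto intro!: continuous_intros)
  have "avg (chart_act (e2pi s, y)) = integral {0..1} (\<lambda>t. \<psi> (e2pi s) (avg_integrand y (t + s)))"
    by (simp add: avg_def shift)
  also have "\<dots> = \<psi> (e2pi s) (integral {0..1} (\<lambda>t. avg_integrand y (t + s)))"
    using integral_linear[OF integrable_continuous_interval[OF cont]
        bounded_linear_psi[OF e2pi_nonzero]]
    by (simp add: o_def)
  also have "integral {0..1} (\<lambda>t. avg_integrand y (t + s)) = avg y"
    unfolding avg_def
  proof (rule integral_periodic_shift[OF continuous_on_avg_integrand[OF y] _ s])
    fix t
    have "e2pi (- (t + 1)) = e2pi (- t)" using e2pi_periodic[of "- t - 1"] by simp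
    then show "avg_integrand y (t + 1) = avg_integrand y t" by (simp add: avg_integrand_def)
  qed
  finally show ?thesis .
qed

text \<open>Both sides are holomorphic in \<open>w\<close> and agree on the unit circle by construction.\<close>

lemma avg_equivariant_near_1:
  assumes y: "y \<in> circle_dom"
    and near: "\<And>w. w \<in> ball 1 (1/2) \<Longrightarrow> (w, y) \<in> chart_dom \<and> chart_act (w, y) \<in> circle_dom"
    and w: "w \<in> ball 1 (1/2)"
  shows "avg (chart_act (w, y)) = \<psi> w (avg y)"
proof -
  have "avg (chart_act (w, y)) $ j - \<psi> w (avg y) $ j = 0" for j
  proof (rule analytic_continuation[where f = "\<lambda>z. avg (chart_act (z, y)) $ j - \<psi> z (avg y) $ j"
        and S = "ball 1 (1/2)" and U = "e2pi ` {0<..<1} \<inter> ball 1 (1/2)" and \<xi> = 1])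
    have "(\<lambda>z. avg (chart_act (z, y)) $ j) holomorphic_on ball 1 (1/2)"
    proof (rule holomorphic_on_vec_nth)
      fix z :: complex assume z: "z \<in> ball 1 (1/2)"
      obtain a where a: "((\<lambda>z. chart_act (z, y)) has_derivative (\<lambda>h. h *s a)) (at z)"
        using holo2_has_derivative_fst[OF holo2_chart_act] near[OF z] by blast
      have "((\<lambda>z. avg (chart_act (z, y))) has_derivative
          (\<lambda>h. avg_deriv (chart_act (z, y)) (h *s a))) (at z)"
        using diff_chain_at[OF a avg_has_derivative] near[OF z] by (simp add: o_def)
      then show "\<exists>b. ((\<lambda>z. avg (chart_act (z, y))) has_derivative (\<lambda>h. h *s b)) (at z)"
        using avg_deriv_scale near[OF z] by auto
    qed
    moreover have "(\<lambda>z. \<psi> z (avg y) $ j) holomorphic_on ball 1 (1/2)"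
      by (rule holomorphic_on_subset[OF holomorphic_on_psi]) (auto simp: dist_norm)
    ultimately show "(\<lambda>z. avg (chart_act (z, y)) $ j - \<psi> z (avg y) $ j) holomorphic_on ball 1 (1/2)"
      by (intro holomorphic_intros)
    show "1 islimpt e2pi ` {0<..<1} \<inter> ball 1 (1/2)" by (rule one_islimpt_e2pi) simp
    fix z assume "z \<in> e2pi ` {0<..<1} \<inter> ball 1 (1/2)"
    then obtain s where "z = e2pi s" "0 < s" "s < 1" by auto
    then show "avg (chart_act (z, y)) $ j - \<psi> z (avg y) $ j = 0"
      using avg_equivariant_circle[OF y, of s] by simp
  qed (use w in auto)
  then show ?thesis by (simp add: vec_eq_iff)
qed

lemma equivariant_contracting_from_near_1:
  assumes Y: "Y \<subseteq> \<xi> ` U"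
    and near_1: "\<And>w y. w \<in> ball 1 (1/2) \<Longrightarrow> w \<in> contracting \<Longrightarrow> y \<in> Y \<Longrightarrow>
      (w, y) \<in> chart_dom \<and> chart_act (w, y) \<in> Y \<and> avg (chart_act (w, y)) = \<psi> w (avg y)"
    and w: "w \<in> contracting" and y: "y \<in> Y"
  shows "(w, y) \<in> chart_dom \<and> chart_act (w, y) \<in> Y \<and> avg (chart_act (w, y)) = \<psi> w (avg y)"
proof -
  have "(1/2::real) > 0" by simp
  then obtain w1 k where w1: "w1 \<in> ball 1 (1/2)" "w1 \<in> contracting" and wk: "w = w1 ^ k"
    by (rule contracting_root[OF w])
  have w10: "w1 \<noteq> 0" by (rule contracting_nonzero[OF w1(2)])
  have "(w1 ^ k, y) \<in> chart_dom \<and> chart_act (w1 ^ k, y) \<in> Y \<and>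
      avg (chart_act (w1 ^ k, y)) = \<psi> (w1 ^ k) (avg y)"
  proof (induction k)
    case 0
    show ?case using chart_act_1[of y] Y y by auto
  next
    case (Suc k)
    let ?y = "chart_act (w1 ^ k, y)"
    have step: "(w1, ?y) \<in> chart_dom" "chart_act (w1, ?y) \<in> Y"
        "avg (chart_act (w1, ?y)) = \<psi> w1 (avg ?y)"
      using near_1[OF w1] Suc.IH by auto
    have "chart_act (w1, ?y) = chart_act (w1 * w1 ^ k, y)" "(w1 * w1 ^ k, y) \<in> chart_dom"
      using chart_act_mult[OF Suc.IH[THEN conjunct1] w10] step(1) by auto
    then show ?case using step Suc.IH w10 by (simp add: psi_mult)
  qed
  then show ?thesis by (simp add: wk)
qed

lemma avg_local_inverse:
  obtains Y0 V g where "open Y0" "Y0 \<subseteq> circle_dom" "c \<in> Y0" "open V"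
    "homeomorphism Y0 V avg g" "holo V g"
  by (rule holo_inverse_function[OF open_circle_dom avg_has_derivative avg_deriv_scale
        continuous_on_avg_deriv c_in_circle_dom avg_deriv_c])

lemma chart_act_tube:
  assumes "open Y0" "c \<in> Y0"
  obtains r where "r > 0" "ball c r \<subseteq> Y0"
    "\<And>w y. w \<in> cball 1 (1/2) \<Longrightarrow> y \<in> ball c r \<Longrightarrow> (w, y) \<in> chart_dom \<and> chart_act (w, y) \<in> Y0"
proof -
  have "open (chart_dom \<inter> chart_act -` Y0)"
    by (rule continuous_open_preimage[OF continuous_on_chart_act open_chart_dom assms(1)])
  moreover have "cball 1 (1/2) \<times> {c} \<subseteq> chart_dom \<inter> chart_act -` Y0"
  proof
    fix q :: "complex \<times> (complex^'n)" assume "q \<in> cball 1 (1/2) \<times> {c}"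
    then obtain w where q: "q = (w, c)" "w \<in> cball 1 (1/2)" by auto
    then have "w \<noteq> 0" by (auto simp: dist_norm)
    then show "q \<in> chart_dom \<inter> chart_act -` Y0" using chart_act_c assms(2) q(1) by auto
  qed
  ultimately obtain r where r: "r > 0" "cball 1 (1/2) \<times> ball c r \<subseteq> chart_dom \<inter> chart_act -` Y0"
    by (rule compact_times_ball_subset[OF compact_cball])
  then have tube: "(w, y) \<in> chart_dom \<and> chart_act (w, y) \<in> Y0"
    if "w \<in> cball 1 (1/2)" "y \<in> ball c r" for w y
    using that by blast
  have ball: "ball c r \<subseteq> Y0"
  proof
    fix y assume "y \<in> ball c r"
    then have "(1, y) \<in> chart_dom" "chart_act (1, y) \<in> Y0" using tube[of 1 y] by auto
    then show "y \<in> Y0" using chart_act_1(2) chart_dom_fst by metis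
  qed
  show ?thesis by (rule that[OF r(1) ball tube])
qed

lemma near_1_invariant:
  assumes Y0: "Y0 \<subseteq> circle_dom" "inj_on avg Y0" "ball c r \<subseteq> Y0"
    and tube: "\<And>w y. w \<in> cball 1 (1/2) \<Longrightarrow> y \<in> ball c r \<Longrightarrow> (w, y) \<in> chart_dom \<and> chart_act (w, y) \<in> Y0"
    and B: "B \<subseteq> avg ` ball c r" "\<And>w u. w \<in> contracting \<Longrightarrow> u \<in> B \<Longrightarrow> \<psi> w u \<in> B"
    and w: "w \<in> ball 1 (1/2)" "w \<in> contracting" and y: "y \<in> ball c r \<inter> avg -` B"
  shows "(w, y) \<in> chart_dom \<and> chart_act (w, y) \<in> ball c r \<inter> avg -` B \<and>
    avg (chart_act (w, y)) = \<psi> w (avg y)"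
proof -
  have yb: "y \<in> ball c r" and "avg y \<in> B" using y by auto
  have tw: "(w, y) \<in> chart_dom" "chart_act (w, y) \<in> Y0" using tube[OF _ yb, of w] w(1) by auto
  have near: "(w', y) \<in> chart_dom \<and> chart_act (w', y) \<in> circle_dom" if "w' \<in> ball 1 (1/2)" for w'
    using tube[OF _ yb, of w'] that Y0(1) by auto
  have eq: "avg (chart_act (w, y)) = \<psi> w (avg y)"
    by (rule avg_equivariant_near_1[OF _ near w(1)]) (use yb Y0 in auto)
  have inB: "\<psi> w (avg y) \<in> B" using B(2)[OF w(2) \<open>avg y \<in> B\<close>] .
  then obtain y2 where y2: "y2 \<in> ball c r" "avg y2 = \<psi> w (avg y)" using B(1) by auto
  have "chart_act (w, y) = y2"
    using inj_onD[OF Y0(2), of "chart_act (w, y)" y2] tw(2) y2 eq Y0(3) by auto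
  then show ?thesis using tw(1) y2(1) inB eq by simp
qed

lemma exists_invariant_chart_nbhd:
  obtains Y B g where "open Y" "c \<in> Y" "Y \<subseteq> \<xi> ` U" "holo Y avg"
    "homeomorphism Y B avg g" "holo B g"
    "\<forall>w\<in>contracting. \<forall>y\<in>Y.
      (w, y) \<in> chart_dom \<and> chart_act (w, y) \<in> Y \<and> avg (chart_act (w, y)) = \<psi> w (avg y)"
proof -
  obtain Y0 V g where Y0: "open Y0" "Y0 \<subseteq> circle_dom" "c \<in> Y0" "open V"
    and hom: "homeomorphism Y0 V avg g" and g: "holo V g"
    by (rule avg_local_inverse)
  have inj: "inj_on avg Y0" using hom by (intro inj_on_inverseI) (rule homeomorphism_apply1)
  obtain r where r: "r > 0" "ball c r \<subseteq> Y0"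
    and tube: "\<And>w y. w \<in> cball 1 (1/2) \<Longrightarrow> y \<in> ball c r \<Longrightarrow> (w, y) \<in> chart_dom \<and> chart_act (w, y) \<in> Y0"
    using chart_act_tube[OF Y0(1,3)] by blast
  have "openin (top_of_set Y0) (ball c r)" using r(2) by (simp add: openin_open_eq Y0(1))
  from homeomorphism_imp_open_map[OF hom this]
  have open_img: "open (avg ` ball c r)" using Y0(4) openin_open_trans by blast
  have zero_img: "0 \<in> avg ` ball c r" using r(1) avg_c by (metis centre_in_ball image_eqI)
  obtain b where b: "b > 0" "polydisc b \<subseteq> avg ` ball c r"
    by (rule polydisc_subset[OF open_img zero_img])
  define B where "B = polydisc b"
  have B: "open B" "0 \<in> B" "B \<subseteq> avg ` ball c r"
    and B_inv: "\<And>w u. w \<in> contracting \<Longrightarrow> u \<in> B \<Longrightarrow> \<psi> w u \<in> B"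
    using b open_polydisc zero_in_polydisc polydisc_invariant by (simp_all add: B_def)
  define Y where "Y = ball c r \<inter> avg -` B"
  have "continuous_on (ball c r) avg"
    by (rule continuous_on_subset[OF holo_continuous_on[OF holo_avg]]) (use r(2) Y0(2) in auto)
  then have oY: "open Y" unfolding Y_def by (rule continuous_open_preimage[OF _ open_ball B(1)])
  have hY: "holo Y avg"
    by (rule holo_transform[OF holo_avg oY]) (use r(2) Y0(2) in \<open>auto simp: Y_def\<close>)
  have "avg ` Y = B" using B(3) by (auto simp: Y_def)
  then have hom_Y: "homeomorphism Y B avg g"
    by (intro homeomorphism_of_subsets[OF hom]) (use r(2) in \<open>auto simp: Y_def\<close>)
  have "B \<subseteq> V" using B(3) r(2) homeomorphism_image1[OF hom] by blast
  then have hB: "holo B g" by (intro holo_transform[OF g B(1)]) auto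
  have "\<forall>w\<in>contracting. \<forall>y\<in>Y.
      (w, y) \<in> chart_dom \<and> chart_act (w, y) \<in> Y \<and> avg (chart_act (w, y)) = \<psi> w (avg y)"
    using equivariant_contracting_from_near_1[OF _
        near_1_invariant[OF Y0(2) inj r(2) tube B(3) B_inv]]
      r(2) Y0(2) circle_dom_subset
    unfolding Y_def by blast
  moreover have "c \<in> Y" "Y \<subseteq> \<xi> ` U" using r B(2) avg_c Y0(2) circle_dom_subset by (auto simp: Y_def)
  ultimately show ?thesis using oY hY hom_Y hB that by blast
qed

lemma exists_linearization:
  "\<exists>A T. open A \<and> p \<in> A \<and> (\<forall>z. z \<noteq> 0 \<longrightarrow> \<phi> z ` A \<subseteq> A) \<and> biholomorphism atlas A UNIV T \<and>
     (\<forall>z. z \<noteq> 0 \<longrightarrow> (\<forall>x\<in>A. \<psi> z (T x) = T (\<phi> z x)))"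
proof -
  obtain Y B g where Y: "open Y" "c \<in> Y" "Y \<subseteq> \<xi> ` U" "holo Y avg"
    and hom: "homeomorphism Y B avg g" and g: "holo B g"
    and inv: "\<forall>w\<in>contracting. \<forall>y\<in>Y.
      (w, y) \<in> chart_dom \<and> chart_act (w, y) \<in> Y \<and> avg (chart_act (w, y)) = \<psi> w (avg y)"
    by (rule exists_invariant_chart_nbhd)
  define W where "W = U \<inter> \<xi> -` Y"
  have biholo: "biholomorphism atlas W B (avg \<circ> \<xi>)"
    unfolding W_def by (rule biholomorphism_chart_restrict[OF chart_p(1) Y(1,3,4) hom g])
  then have "open W" by (simp add: biholomorphism_def holo_from_mfd_def)
  moreover have "p \<in> W" "(avg \<circ> \<xi>) p = 0" using chart_p(2) Y(2) avg_c by (simp_all add: W_def c_def)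
  moreover have "\<phi> w x \<in> W \<and> (avg \<circ> \<xi>) (\<phi> w x) = \<psi> w ((avg \<circ> \<xi>) x)"
    if "w \<in> contracting" "x \<in> W" for w x
  proof -
    have "(w, \<xi> x) \<in> chart_dom" "chart_act (w, \<xi> x) \<in> Y"
      "avg (chart_act (w, \<xi> x)) = \<psi> w (avg (\<xi> x))"
      using inv that by (auto simp: W_def)
    then show ?thesis using that(2) chart_p(1) by (simp add: chart_dom_def chart_act_def W_def)
  qed
  ultimately interpret local_linearization atlas \<phi> \<psi> P lam pos p W "avg \<circ> \<xi>" B
    using biholo
    by (intro local_linearization.intro Cstar_manifold_axioms dicritical_action_axioms
        local_linearization_axioms.intro) auto
  show ?thesis by (rule global_linearization)
qed

end

theorem theoremB:
  fixes atlas :: "('m::t2_space set \<times> ('m \<Rightarrow> complex^'n)) set"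
    and \<phi> :: "complex \<Rightarrow> 'm \<Rightarrow> 'm" and p :: 'm
    and U :: "'m set" and \<xi> :: "'m \<Rightarrow> complex^'n"
  assumes atlas: "complex_atlas atlas"
    and action: "holomorphic_Cstar_action atlas \<phi>"
    and fixed: "\<forall>z. z \<noteq> 0 \<longrightarrow> \<phi> z p = p"
    and isolated: "\<exists>W. open W \<and> p \<in> W \<and>
                     (\<forall>q\<in>W. q \<noteq> p \<longrightarrow> (\<exists>z. z \<noteq> 0 \<and> \<phi> z q \<noteq> q))"
    and chart: "(U, \<xi>) \<in> atlas" "p \<in> U"
    and dicr: "dicritical (derivative_action \<xi> U \<phi> p)"
  shows "\<exists>A B T. open A \<and> p \<in> A \<and> (\<forall>z. z \<noteq> 0 \<longrightarrow> \<phi> z ` A \<subseteq> A) \<and>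
           open B \<and> 0 \<in> B \<and> (\<forall>z. z \<noteq> 0 \<longrightarrow> derivative_action \<xi> U \<phi> p z ` B \<subseteq> B) \<and>
           biholomorphism atlas A B T \<and>
           (\<forall>z. z \<noteq> 0 \<longrightarrow> (\<forall>x\<in>A. derivative_action \<xi> U \<phi> p z (T x) = T (\<phi> z x)))"
proof -
  obtain P and lam :: "'n \<Rightarrow> int" where P: "complex_linear P" "bij P"
    and lam: "(\<forall>j. lam j > 0) \<or> (\<forall>j. lam j < 0)"
    and psi: "\<And>z v. z \<noteq> 0 \<Longrightarrow> derivative_action \<xi> U \<phi> p z (P v) = P (\<chi> j. z powi (lam j) * v $ j)"
    using dicr unfolding dicritical_def by blast
  interpret dicritical_fixed_point atlas \<phi> p U \<xi> P lam "\<forall>j. lam j > 0"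
    by (intro dicritical_fixed_point.intro Cstar_manifold.intro complex_manifold.intro
        Cstar_manifold_axioms.intro dicritical_action.intro dicritical_fixed_point_axioms.intro)
      (use atlas action fixed chart P lam psi in auto)
  obtain A T where "open A" "p \<in> A" "\<forall>z. z \<noteq> 0 \<longrightarrow> \<phi> z ` A \<subseteq> A" "biholomorphism atlas A UNIV T"
    "\<forall>z. z \<noteq> 0 \<longrightarrow> (\<forall>x\<in>A. derivative_action \<xi> U \<phi> p z (T x) = T (\<phi> z x))"
    using exists_linearization by blast
  then show ?thesis by (intro exI[of _ A] exI[of _ UNIV] exI[of _ T]) auto
qed

end
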